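(* Let $X$ be a Hilbert space, $B$, $(X_\tau)$, $a>0$, $G$, $\varphi$, $\overline{u}$, $u^\dagger$ as in the context with $u^\dagger-\overline{u}=\varphi(G)w$, $\|w\|\le\rho$. For $\alpha>0$ let $\hat u_\alpha:=\overline{u}+G(G+\alpha I)^{-1}(u^\dagger-\overline{u})$ and $r:=\frac{2a+2}{a}$. Then there exist positive constants $C_1,C_2,C_3$ and $\alpha_0\le\|G\|$ such that for all $\alpha\in(0,\alpha_0]$: (i) $\|\hat u_\alpha-u^\dagger\|\le C_1\varphi(\alpha)$; (ii) $\|\hat u_\alpha-u^\dagger\|_{-a}\le C_2\alpha^{1/r}\varphi(\alpha)$; (iii) $\|\hat u_\alpha-\overline{u}\|_1\le C_3\alpha^{-\frac{1}{ra}}\varphi(\alpha)$.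
   Context: $B:\mathcal{D}(B)\subset X\to X$ is a densely defined, selfadjoint, unbounded linear operator with $\|Bu\|\ge m\|u\|$ for all $u\in\mathcal{D}(B)$, some $m>0$. Hilbert scale: $X_\tau=\mathcal{D}(B^\tau)$ for $\tau>0$ and $X_\tau=X$ for $\tau\le0$, with $\|u\|_\tau=\|B^\tau u\|$. $G:=B^{-(2a+2)}$ (bounded, injective, selfadjoint, positive semidefinite). $\kappa>0$, $c\in(0,\|G\|^{-1})$, $\varphi:(0,\|G\|]\to(0,\infty)$, $\varphi(t)=(-\ln(ct))^{-\kappa}$. $\overline{u},u^\dagger\in X$ with $u^\dagger-\overline{u}=\varphi(G)w$ for some $w\in X$, $\|w\|\le\rho$, $\rho>0$. *)

theory Defs
  imports "HOL-Analysis.Analysis" "HOL-Computational_Algebra.Polynomial"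
begin

definition poly_op :: "real poly \<Rightarrow> ('a::real_normed_vector \<Rightarrow> 'a) \<Rightarrow> 'a \<Rightarrow> 'a" where
  "poly_op p T x = (\<Sum>i\<le>degree p. coeff p i *\<^sub>R (T ^^ i) x)"

text \<open>Continuous functional calculus of a bounded, selfadjoint, positive semidefinite
  operator T (spectrum contained in [0, norm T]): f(T) is the operator-norm limit of p(T)
  for polynomials p converging uniformly to f on [0, norm T].\<close>
definition fcalc :: "(real \<Rightarrow> real) \<Rightarrow> ('a::real_normed_vector \<Rightarrow> 'a) \<Rightarrow> 'a \<Rightarrow> 'a" where
  "fcalc f T = (THE S. bounded_linear S \<and>
     (\<forall>\<epsilon>>0. \<exists>\<delta>>0. \<forall>p. (\<forall>t\<in>{0..onorm T}. \<bar>poly p t - f t\<bar> < \<delta>) \<longrightarrow>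
        onorm (\<lambda>x. S x - poly_op p T x) \<le> \<epsilon>))"

definition resolv :: "('a::real_normed_vector \<Rightarrow> 'a) \<Rightarrow> real \<Rightarrow> 'a \<Rightarrow> 'a" where
  "resolv T \<alpha> = (THE R. bounded_linear R \<and> (\<forall>x. R (T x + \<alpha> *\<^sub>R x) = x)
                        \<and> (\<forall>x. T (R x) + \<alpha> *\<^sub>R R x = x))"

definition phi :: "real \<Rightarrow> real \<Rightarrow> real \<Rightarrow> real" where
  "phi c \<kappa> t = (if t \<le> 0 then 0 else (- ln (c * t)) powr (- \<kappa>))"

definition linear_on :: "'a::real_vector set \<Rightarrow> ('a \<Rightarrow> 'a) \<Rightarrow> bool" where
  "linear_on D B \<longleftrightarrow> (\<forall>u\<in>D. \<forall>v\<in>D. B (u + v) = B u + B v) \<and> (\<forall>r. \<forall>u\<in>D. B (r *\<^sub>R u) = r *\<^sub>R B u)"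

definition selfadjoint_unbounded :: "'a::{real_inner,complete_space} set \<Rightarrow> ('a \<Rightarrow> 'a) \<Rightarrow> bool" where
  "selfadjoint_unbounded D B \<longleftrightarrow> subspace D \<and> closure D = UNIV \<and> linear_on D B
     \<and> (\<forall>u\<in>D. \<forall>v\<in>D. inner (B u) v = inner u (B v))
     \<and> (\<forall>v. (\<exists>z. \<forall>u\<in>D. inner (B u) v = inner u z) \<longrightarrow> v \<in> D)
     \<and> \<not> (\<exists>K. \<forall>u\<in>D. norm (B u) \<le> K * norm u)"

text \<open>B^{-s} for s >= 0, defined through the bounded positive inverse Binv = B^{-1}.\<close>
definition neg_pow :: "('a::real_normed_vector \<Rightarrow> 'a) \<Rightarrow> real \<Rightarrow> 'a \<Rightarrow> 'a" where
  "neg_pow Binv s = fcalc (\<lambda>t. t powr s) Binv"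

definition uhat :: "('a::real_normed_vector \<Rightarrow> 'a) \<Rightarrow> 'a \<Rightarrow> 'a \<Rightarrow> real \<Rightarrow> 'a" where
  "uhat G ubar udag \<alpha> = ubar + G (resolv G \<alpha> (udag - ubar))"

end

theory Submission
  imports Defs
begin

text \<open>With \<open>s = 2a + 2\<close> and \<open>G = B\<^sup>-\<^sup>s\<close>, all operators involved are functions of \<open>G\<close>:
  \<open>B\<^sup>-\<^sup>1 = G\<^sup>1\<^sup>/\<^sup>s\<close>, \<open>B\<^sup>-\<^sup>a = G\<^sup>a\<^sup>/\<^sup>s\<close>, and by the source condition
  \<open>\<hat>u\<^sub>\<alpha> - u\<^sup>\<dagger> = -\<alpha> (G + \<alpha>)\<^sup>-\<^sup>1 \<phi>(G) w\<close> and
  \<open>\<hat>u\<^sub>\<alpha> - \<bar>u = B\<^sup>-\<^sup>1 G\<^sup>1\<^sup>-\<^sup>1\<^sup>/\<^sup>s (G + \<alpha>)\<^sup>-\<^sup>1 \<phi>(G) w\<close>.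
  Since \<open>\<parallel>f(G)\<parallel> \<le> max\<^bsub>[0, \<parallel>G\<parallel>]\<^esub> \<bar>f\<bar>\<close>, the three estimates reduce to the scalar bound
  \<open>u\<^sup>\<theta> \<phi>(u) / (u + \<alpha>) \<le> C \<alpha>\<^sup>\<theta>\<^sup>-\<^sup>1 \<phi>(\<alpha>)\<close> on \<open>[0, \<parallel>G\<parallel>]\<close> for \<open>\<theta> = 0, a/s, 1 - 1/s\<close>.
  For \<open>u \<le> \<alpha>\<close> it holds because \<open>\<phi>\<close> is increasing; for \<open>u > \<alpha>\<close> the factor
  \<open>(\<alpha>/u)\<^sup>1\<^sup>-\<^sup>\<theta>\<close> is exponentially small in \<open>ln(u/\<alpha>)\<close>, which beats the logarithmic growth of
  \<open>\<phi>(\<alpha>)\<^sup>-\<^sup>1\<close>.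

  The functional calculus is built from polynomials: for a positive operator \<open>T\<close> and
  \<open>\<bar>p\<bar> \<le> M\<close> on \<open>[0, \<parallel>T\<parallel>]\<close>, the polynomial \<open>M\<^sup>2 - p\<^sup>2\<close> has an explicit certificate of
  nonnegativity on \<open>[0, \<parallel>T\<parallel>]\<close> that makes \<open>M\<^sup>2 - p(T)\<^sup>2\<close> a positive operator, whence
  \<open>\<parallel>p(T)\<parallel> \<le> M\<close>; Weierstrass approximation then extends \<open>p \<mapsto> p(T)\<close> to continuous functions.\<close>

section \<open>Polynomials in an operator\<close>

lemma poly_op_eq_sum_lessThan:
  assumes "degree p < n"
  shows "poly_op p T x = (\<Sum>i<n. coeff p i *\<^sub>R (T ^^ i) x)"
proof -
  have "(\<Sum>i<n. coeff p i *\<^sub>R (T ^^ i) x) = (\<Sum>i\<le>degree p. coeff p i *\<^sub>R (T ^^ i) x)"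
    by (rule sum.mono_neutral_right) (use assms in \<open>auto simp: coeff_eq_0\<close>)
  then show ?thesis by (simp add: poly_op_def)
qed

lemma poly_op_0 [simp]: "poly_op 0 T x = 0"
  by (simp add: poly_op_def)

lemma poly_op_const: "poly_op [:c:] T x = c *\<^sub>R x"
  by (simp add: poly_op_def)

lemma poly_op_add: "poly_op (p + q) T x = poly_op p T x + poly_op q T x"
proof -
  define n where "n = Suc (max (degree p) (degree q))"
  have "degree (p + q) < n" "degree p < n" "degree q < n"
    using degree_add_le_max[of p q] by (auto simp: n_def)
  then show ?thesis
    by (simp only: poly_op_eq_sum_lessThan[of _ n] coeff_add scaleR_add_left sum.distrib)
qed

lemma poly_op_smult: "poly_op (smult c p) T x = c *\<^sub>R poly_op p T x"
proof -
  define n where "n = Suc (degree p)"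
  have "degree (smult c p) < n" "degree p < n"
    using degree_smult_le[of c p] by (auto simp: n_def)
  then show ?thesis
    by (simp only: poly_op_eq_sum_lessThan[of _ n] coeff_smult scaleR_sum_right scaleR_scaleR)
qed

lemma poly_op_diff: "poly_op (p - q) T x = poly_op p T x - poly_op q T x"
  using poly_op_add[of p "smult (-1) q" T x] poly_op_smult[of "-1" q T x] by simp

lemma poly_op_pCons:
  assumes "linear T"
  shows "poly_op (pCons c p) T x = c *\<^sub>R x + T (poly_op p T x)"
proof -
  define n where "n = Suc (degree p)"
  have "poly_op (pCons c p) T x = (\<Sum>i<Suc n. coeff (pCons c p) i *\<^sub>R (T ^^ i) x)"
    using degree_pCons_le[of c p] by (intro poly_op_eq_sum_lessThan) (simp add: n_def)
  also have "\<dots> = c *\<^sub>R x + (\<Sum>i<n. coeff p i *\<^sub>R (T ^^ Suc i) x)"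
    by (subst sum.lessThan_Suc_shift) simp
  also have "(\<Sum>i<n. coeff p i *\<^sub>R (T ^^ Suc i) x) = T (\<Sum>i<n. coeff p i *\<^sub>R (T ^^ i) x)"
    using assms by (simp add: linear_sum linear_scale)
  also have "(\<Sum>i<n. coeff p i *\<^sub>R (T ^^ i) x) = poly_op p T x"
    by (rule poly_op_eq_sum_lessThan[symmetric]) (simp add: n_def)
  finally show ?thesis .
qed

lemma poly_op_X: "linear T \<Longrightarrow> poly_op [:0, 1:] T x = T x"
  by (simp add: poly_op_pCons poly_op_const)

lemma poly_op_mult:
  assumes "linear T"
  shows "poly_op (p * q) T x = poly_op p T (poly_op q T x)"
proof (induction p arbitrary: x)
  case (pCons a p)
  have "poly_op (pCons a p * q) T x = a *\<^sub>R poly_op q T x + T (poly_op (p * q) T x)"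
    using assms by (simp add: mult_pCons_left poly_op_add poly_op_smult poly_op_pCons)
  also have "\<dots> = poly_op (pCons a p) T (poly_op q T x)"
    using assms pCons.IH by (simp add: poly_op_pCons)
  finally show ?case .
qed simp

lemma bounded_linear_funpow:
  fixes T :: "'a::real_normed_vector \<Rightarrow> 'a"
  assumes "bounded_linear T"
  shows "bounded_linear (T ^^ i)"
proof (induction i)
  case 0
  show ?case using bounded_linear_ident by (simp add: id_def)
next
  case (Suc i)
  then show ?case using bounded_linear_compose[OF assms Suc.IH] by (simp add: o_def)
qed

lemma bounded_linear_poly_op:
  assumes "bounded_linear T"
  shows "bounded_linear (poly_op p T)"
  unfolding poly_op_def[abs_def]
  by (intro bounded_linear_sum bounded_linear_compose[OF bounded_linear_scaleR_right,
        unfolded o_def, OF bounded_linear_funpow[OF assms]])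

lemma funpow_selfadjoint:
  assumes "\<And>x y. inner (T x) y = inner x (T y)"
  shows "inner ((T ^^ i) x) y = inner x ((T ^^ i) y)"
proof (induction i arbitrary: y)
  case (Suc i)
  have "inner ((T ^^ Suc i) x) y = inner x ((T ^^ i) (T y))" using assms Suc.IH by simp
  then show ?case by (simp add: funpow_swap1)
qed simp

lemma poly_op_selfadjoint:
  assumes "\<And>x y. inner (T x) y = inner x (T y)"
  shows "inner (poly_op p T x) y = inner x (poly_op p T y)"
  unfolding poly_op_def
  by (simp add: inner_sum_left inner_sum_right funpow_selfadjoint[OF assms])

section \<open>Positive operators\<close>

definition positive_op :: "('a::real_inner \<Rightarrow> 'a) \<Rightarrow> bool" where
  "positive_op T \<longleftrightarrow>
    bounded_linear T \<and> (\<forall>x y. inner (T x) y = inner x (T y)) \<and> (\<forall>x. 0 \<le> inner (T x) x)"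

lemma positive_opD:
  assumes "positive_op T"
  shows "bounded_linear T" "linear T" "inner (T x) y = inner x (T y)" "0 \<le> inner (T x) x"
  using assms bounded_linear.linear by (auto simp: positive_op_def)

lemma quadratic_nonneg_imp_discriminant_le:
  fixes A B C :: real
  assumes nonneg: "\<And>l. 0 \<le> A + 2 * l * B + l * l * C" and "0 \<le> C"
  shows "B * B \<le> A * C"
proof (cases "C = 0")
  case True
  have "B = 0"
  proof (rule ccontr)
    assume "B \<noteq> 0"
    have "0 \<le> A + 2 * (- (A + 1) / (2 * B)) * B" using nonneg[of "- (A + 1) / (2 * B)"] True by simp
    also have "\<dots> = -1" using \<open>B \<noteq> 0\<close> by (simp add: field_simps)
    finally show False by simp
  qed
  then show ?thesis using True by simp
next
  case False
  then have "0 < C" using \<open>0 \<le> C\<close> by simp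
  have "0 \<le> A + 2 * (- B / C) * B + (- B / C) * (- B / C) * C" by (rule nonneg)
  also have "\<dots> = A - B * B / C" using \<open>0 < C\<close> by (simp add: field_simps)
  finally show ?thesis using \<open>0 < C\<close> by (simp add: field_simps)
qed

lemma positive_op_Cauchy_Schwarz:
  assumes "positive_op T"
  shows "inner (T u) v * inner (T u) v \<le> inner (T u) u * inner (T v) v"
proof (rule quadratic_nonneg_imp_discriminant_le)
  fix l :: real
  interpret bounded_linear T using positive_opD(1)[OF assms] .
  have "inner (T v) u = inner (T u) v"
    using positive_opD(3)[OF assms, of v u] by (simp add: inner_commute)
  moreover have "0 \<le> inner (T (u + l *\<^sub>R v)) (u + l *\<^sub>R v)" using positive_opD(4)[OF assms] .
  ultimately show "0 \<le> inner (T u) u + 2 * l * inner (T u) v + l * l * inner (T v) v"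
    by (simp add: add scale inner_add_left inner_add_right algebra_simps)
qed (use positive_opD(4)[OF assms] in simp)

lemma positive_op_inner_le:
  assumes "positive_op T"
  shows "inner (T y) y \<le> onorm T * (norm y * norm y)"
proof -
  have "inner (T y) y \<le> norm (T y) * norm y" by (rule norm_cauchy_schwarz)
  also have "\<dots> \<le> onorm T * norm y * norm y"
    using onorm[OF positive_opD(1)[OF assms]] by (simp add: mult_right_mono)
  finally show ?thesis by (simp add: mult.assoc)
qed

lemma positive_op_inner_image_le:
  assumes "positive_op T"
  shows "inner (T y) (T y) \<le> onorm T * inner (T y) y"
proof -
  let ?n = "inner (T y) (T y)"
  have "inner (T (T y)) (T y) \<le> onorm T * ?n"
    using positive_op_inner_le[OF assms, of "T y"] by (simp add: dot_square_norm power2_eq_square)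
  then have "inner (T y) y * inner (T (T y)) (T y) \<le> inner (T y) y * (onorm T * ?n)"
    using positive_opD(4)[OF assms, of y] by (rule mult_left_mono)
  then have "?n * ?n \<le> inner (T y) y * (onorm T * ?n)"
    using positive_op_Cauchy_Schwarz[OF assms, of y "T y"] by simp
  then have "?n * ?n \<le> (onorm T * inner (T y) y) * ?n" by (simp add: algebra_simps)
  then show ?thesis
    by (cases "?n = 0") (auto simp: mult_le_cancel_right)
qed

section \<open>Polynomials that are nonnegative on an interval\<close>

text \<open>The generators are written as sandwiches \<open>q * r * q\<close> so that, for a positive operator \<open>T\<close>
  with \<open>\<parallel>T\<parallel> \<le> L\<close>, the operator \<open>q(T) r(T) q(T)\<close> is visibly positive as well.\<close>

inductive Icc_cone :: "real \<Rightarrow> real poly \<Rightarrow> bool" for L where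
  square: "Icc_cone L (q * q)"
| sandwich_X: "Icc_cone L (q * ([:0, 1:] * q))"
| sandwich_L_minus_X: "Icc_cone L (q * ([:L, -1:] * q))"
| sandwich_X_L_minus_X: "Icc_cone L (q * ([:0, 1:] * ([:L, -1:] * q)))"
| add: "Icc_cone L p \<Longrightarrow> Icc_cone L p' \<Longrightarrow> Icc_cone L (p + p')"

lemma Icc_cone_const: "0 \<le> c \<Longrightarrow> Icc_cone L [:c:]"
  using Icc_cone.square[of L "[:sqrt c:]"] by (simp add: real_sqrt_mult[symmetric])

lemma Icc_cone_mult_X: "Icc_cone L p \<Longrightarrow> Icc_cone L ([:0, 1:] * p)"
proof (induction rule: Icc_cone.induct)
  case (square q)
  then show ?case using Icc_cone.sandwich_X[of L q] by (simp only: ac_simps)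
next
  case (sandwich_X q)
  then show ?case using Icc_cone.square[of L "[:0, 1:] * q"] by (simp only: ac_simps)
next
  case (sandwich_L_minus_X q)
  then show ?case using Icc_cone.sandwich_X_L_minus_X[of L q] by (simp only: ac_simps)
next
  case (sandwich_X_L_minus_X q)
  then show ?case using Icc_cone.sandwich_L_minus_X[of L "[:0, 1:] * q"] by (simp only: ac_simps)
qed (simp only: distrib_left Icc_cone.add)

lemma Icc_cone_mult_L_minus_X: "Icc_cone L p \<Longrightarrow> Icc_cone L ([:L, -1:] * p)"
proof (induction rule: Icc_cone.induct)
  case (square q)
  then show ?case using Icc_cone.sandwich_L_minus_X[of L q] by (simp only: ac_simps)
next
  case (sandwich_X q)
  then show ?case using Icc_cone.sandwich_X_L_minus_X[of L q] by (simp only: ac_simps)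
next
  case (sandwich_L_minus_X q)
  then show ?case using Icc_cone.square[of L "[:L, -1:] * q"] by (simp only: ac_simps)
next
  case (sandwich_X_L_minus_X q)
  then show ?case using Icc_cone.sandwich_X[of L "[:L, -1:] * q"] by (simp only: ac_simps)
qed (simp only: distrib_left Icc_cone.add)

lemma Icc_cone_mult_square: "Icc_cone L p \<Longrightarrow> Icc_cone L (r * r * p)"
proof (induction rule: Icc_cone.induct)
  case (square q)
  then show ?case using Icc_cone.square[of L "r * q"] by (simp only: ac_simps)
next
  case (sandwich_X q)
  then show ?case using Icc_cone.sandwich_X[of L "r * q"] by (simp only: ac_simps)
next
  case (sandwich_L_minus_X q)
  then show ?case using Icc_cone.sandwich_L_minus_X[of L "r * q"] by (simp only: ac_simps)
next
  case (sandwich_X_L_minus_X q)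
  then show ?case using Icc_cone.sandwich_X_L_minus_X[of L "r * q"] by (simp only: ac_simps)
qed (simp only: distrib_left Icc_cone.add)

lemma poly_nonneg_at_left_end:
  fixes q :: "real poly"
  assumes "r < b" "\<forall>t\<in>{r<..b}. 0 \<le> poly q t"
  shows "0 \<le> poly q r"
proof (rule tendsto_lowerbound)
  show "(poly q \<longlongrightarrow> poly q r) (at_right r)"
    by (intro tendsto_poly tendsto_ident_at)
  show "\<forall>\<^sub>F t in at_right r. 0 \<le> poly q t"
    using eventually_at_right_real[OF assms(1)] by eventually_elim (use assms(2) in auto)
qed simp

lemma poly_nonneg_at_right_end:
  fixes q :: "real poly"
  assumes "a < r" "\<forall>t\<in>{a<..<r}. 0 \<le> poly q t"
  shows "0 \<le> poly q r"
proof (rule tendsto_lowerbound)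
  show "(poly q \<longlongrightarrow> poly q r) (at_left r)"
    by (intro tendsto_poly tendsto_ident_at)
  show "\<forall>\<^sub>F t in at_left r. 0 \<le> poly q t"
    using eventually_at_left_real[OF assms(1)] by eventually_elim (use assms(2) in auto)
qed simp

lemma nonneg_poly_root_0:
  fixes p :: "real poly"
  assumes "0 < L" "\<forall>t\<in>{0..L}. 0 \<le> poly p t" "poly p 0 = 0"
  obtains q where "p = [:0, 1:] * q" "\<forall>t\<in>{0..L}. 0 \<le> poly q t"
proof -
  obtain q where q: "p = [:0, 1:] * q"
    using assms(3) poly_eq_0_iff_dvd[of p 0] by (auto elim: dvdE)
  have "\<forall>t\<in>{0<..L}. 0 \<le> poly q t"
    using assms(2) by (auto simp: q zero_le_mult_iff)
  with poly_nonneg_at_left_end[OF assms(1)] have "\<forall>t\<in>{0..L}. 0 \<le> poly q t"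
    by (metis atLeastAtMost_iff greaterThanAtMost_iff order_le_less)
  with q that show ?thesis by blast
qed

lemma nonneg_poly_root_L:
  fixes p :: "real poly"
  assumes "0 < L" "\<forall>t\<in>{0..L}. 0 \<le> poly p t" "poly p L = 0"
  obtains q where "p = [:L, -1:] * q" "\<forall>t\<in>{0..L}. 0 \<le> poly q t"
proof -
  obtain q' where q': "p = [:-L, 1:] * q'"
    using assms(3) poly_eq_0_iff_dvd[of p L] by (auto elim: dvdE)
  have "p = [:L, -1:] * (- q')" by (simp add: q')
  moreover have "\<forall>t\<in>{0..<L}. 0 \<le> poly (- q') t"
  proof
    fix t assume t: "t \<in> {0..<L}"
    have "0 \<le> poly p t" using assms(2) t by simp
    also have "poly p t = (t - L) * poly q' t" by (simp add: q' algebra_simps)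
    finally have "0 \<le> (t - L) * poly q' t" .
    with t show "0 \<le> poly (- q') t" by (simp add: zero_le_mult_iff)
  qed
  then have "\<forall>t\<in>{0..L}. 0 \<le> poly (- q') t"
    using poly_nonneg_at_right_end[OF assms(1)]
    by (metis atLeastAtMost_iff atLeastLessThan_iff greaterThanLessThan_iff order_le_less)
  ultimately show ?thesis using that by blast
qed

lemma nonneg_poly_root_interior:
  fixes p :: "real poly"
  assumes "0 < r" "r < L" "\<forall>t\<in>{0..L}. 0 \<le> poly p t" "poly p r = 0"
  obtains q where "p = [:-r, 1:] * [:-r, 1:] * q" "\<forall>t\<in>{0..L}. 0 \<le> poly q t"
proof -
  obtain q1 where q1: "p = [:-r, 1:] * q1"
    using assms(4) poly_eq_0_iff_dvd[of p r] by (auto elim: dvdE)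
  have nonneg: "0 \<le> (t - r) * poly q1 t" if "t \<in> {0..L}" for t
    using assms(3) that by (simp add: q1 algebra_simps)
  have "0 \<le> poly q1 t" if "t \<in> {r<..L}" for t
    using nonneg[of t] that assms(1) by (simp add: zero_le_mult_iff)
  then have right: "0 \<le> poly q1 r"
    using assms(2) by (intro poly_nonneg_at_left_end[of r L]) auto
  have "0 \<le> poly (- q1) t" if "t \<in> {0<..<r}" for t
    using nonneg[of t] that assms(2) by (simp add: zero_le_mult_iff)
  then have left: "0 \<le> poly (- q1) r"
    using assms(1) by (intro poly_nonneg_at_right_end[of 0 r]) auto
  from left right have "poly q1 r = 0" by simp
  then obtain q where q: "q1 = [:-r, 1:] * q"
    using poly_eq_0_iff_dvd[of q1 r] by (auto elim: dvdE)
  have pq: "poly p t = (t - r) * (t - r) * poly q t" for t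
    by (simp add: q1 q algebra_simps)
  have off_r: "0 \<le> poly q t" if "t \<in> {0..L}" "t \<noteq> r" for t
  proof -
    have "0 < (t - r) * (t - r)" using that(2) by (auto simp: zero_less_mult_iff)
    moreover have "0 \<le> (t - r) * (t - r) * poly q t" using assms(3) that(1) pq[of t] by metis
    ultimately show ?thesis by (simp add: zero_le_mult_iff)
  qed
  then have "0 \<le> poly q r"
    using assms by (intro poly_nonneg_at_left_end[of r L]) auto
  with off_r have "\<forall>t\<in>{0..L}. 0 \<le> poly q t" by metis
  moreover have "p = [:-r, 1:] * [:-r, 1:] * q" by (simp only: q1 q mult.assoc)
  ultimately show ?thesis using that by blast
qed

lemma nonneg_poly_root_factor:
  fixes p :: "real poly"
  assumes "0 < L" "\<forall>t\<in>{0..L}. 0 \<le> poly p t" "r \<in> {0..L}" "poly p r = 0"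
  obtains f q where "p = f * q" "\<forall>t\<in>{0..L}. 0 \<le> poly q t"
    "\<And>q. Icc_cone L q \<Longrightarrow> Icc_cone L (f * q)" "0 < degree f"
proof -
  have deg: "0 < degree [:0, 1 :: real:]" "0 < degree [:L, -1:]"
    "0 < degree ([:-r, 1:] * [:-r, 1:])"
    by (simp_all add: degree_mult_eq degree_pCons_eq_if)
  consider "r = 0" | "r = L" | "0 < r" "r < L" using assms(3) by fastforce
  then show ?thesis
  proof cases
    case 1
    then obtain q where "p = [:0, 1:] * q" "\<forall>t\<in>{0..L}. 0 \<le> poly q t"
      using nonneg_poly_root_0[OF assms(1,2)] assms(4) by blast
    then show ?thesis using Icc_cone_mult_X deg(1) by (rule that)
  next
    case 2
    then obtain q where "p = [:L, -1:] * q" "\<forall>t\<in>{0..L}. 0 \<le> poly q t"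
      using nonneg_poly_root_L[OF assms(1,2)] assms(4) by blast
    then show ?thesis using Icc_cone_mult_L_minus_X deg(2) by (rule that)
  next
    case 3
    then obtain q where "p = [:-r, 1:] * [:-r, 1:] * q" "\<forall>t\<in>{0..L}. 0 \<le> poly q t"
      using nonneg_poly_root_interior[OF 3 assms(2,4)] by blast
    then show ?thesis using Icc_cone_mult_square deg(3) by (rule that)
  qed
qed

text \<open>Subtract the minimum of \<open>p\<close> on \<open>[0, L]\<close>; the resulting zero yields a factor that
  \<open>Icc_cone L\<close> is closed under, and the cofactor has smaller degree.\<close>

lemma nonneg_on_Icc_imp_Icc_cone:
  assumes "0 < L" and "\<forall>t\<in>{0..L}. 0 \<le> poly p t"
  shows "Icc_cone L p"
  using assms(2)
proof (induction "degree p" arbitrary: p rule: less_induct)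
  case less
  show ?case
  proof (cases "degree p = 0")
    case True
    then obtain c where "p = [:c:]" by (metis degree_eq_zeroE)
    moreover have "0 \<le> poly p 0" using less.prems assms(1) by simp
    ultimately show ?thesis by (simp add: Icc_cone_const)
  next
    case False
    obtain r where r: "r \<in> {0..L}" "\<forall>t\<in>{0..L}. poly p r \<le> poly p t"
      using continuous_attains_inf[OF compact_Icc _ continuous_on_poly[OF continuous_on_id],
          of 0 L p] assms(1)
      by auto
    define p' where "p' = p - [:poly p r:]"
    have "\<forall>t\<in>{0..L}. 0 \<le> poly p' t" "poly p' r = 0"
      using r by (simp_all add: p'_def)
    then obtain f q where p'_eq: "p' = f * q" and q: "\<forall>t\<in>{0..L}. 0 \<le> poly q t"
      and f: "\<And>q. Icc_cone L q \<Longrightarrow> Icc_cone L (f * q)" "0 < degree f"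
      using nonneg_poly_root_factor[OF assms(1) _ r(1)] by blast
    have "degree p' = degree p"
      using False degree_add_eq_left[of "[:- poly p r:]" p]
      by (simp add: p'_def diff_conv_add_uminus del: add_uminus_conv_diff)
    with False p'_eq have "q \<noteq> 0" "f \<noteq> 0" by auto
    with f(2) have "degree q < degree p"
      using \<open>degree p' = degree p\<close> by (simp add: p'_eq degree_mult_eq)
    with less.hyps q p'_eq f(1) have "Icc_cone L p'" by blast
    moreover have "0 \<le> poly p r" using less.prems r(1) by blast
    ultimately have "Icc_cone L (p' + [:poly p r:])" by (intro Icc_cone.add Icc_cone_const)
    then show ?thesis by (simp add: p'_def)
  qed
qed

lemma Icc_cone_poly_op_nonneg:
  assumes "Icc_cone (onorm T) p" "positive_op T"
  shows "0 \<le> inner (poly_op p T x) x"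
  using assms(1)
proof (induction rule: Icc_cone.induct)
  note lin = positive_opD(2)[OF assms(2)]
  note sandwich = poly_op_selfadjoint[OF positive_opD(3)[OF assms(2)], of q _ x for q]
  have L_minus_X: "poly_op [:onorm T, -1:] T z = onorm T *\<^sub>R z - T z" for z
    by (simp add: poly_op_pCons[OF lin] poly_op_const linear_0[OF lin] linear_neg[OF lin])
  {
    case (square q)
    show ?case using sandwich by (simp add: poly_op_mult[OF lin])
  next
    case (sandwich_X q)
    have "inner (poly_op (q * ([:0, 1:] * q)) T x) x = inner (T (poly_op q T x)) (poly_op q T x)"
      using sandwich by (simp only: poly_op_mult[OF lin] poly_op_X[OF lin])
    then show ?case using positive_opD(4)[OF assms(2)] by simp
  next
    case (sandwich_L_minus_X q)
    define y where "y = poly_op q T x"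
    have "inner (poly_op (q * ([:onorm T, -1:] * q)) T x) x = inner (onorm T *\<^sub>R y - T y) y"
      using sandwich by (simp only: poly_op_mult[OF lin] L_minus_X y_def)
    also have "\<dots> = onorm T * (norm y * norm y) - inner (T y) y"
      by (simp add: inner_diff_left dot_square_norm power2_eq_square)
    finally show ?case using positive_op_inner_le[OF assms(2), of y] by simp
  next
    case (sandwich_X_L_minus_X q)
    define y where "y = poly_op q T x"
    have "inner (poly_op (q * ([:0, 1:] * ([:onorm T, -1:] * q))) T x) x
        = inner (T (onorm T *\<^sub>R y - T y)) y"
      using sandwich by (simp only: poly_op_mult[OF lin] poly_op_X[OF lin] L_minus_X y_def)
    also have "\<dots> = onorm T * inner (T y) y - inner (T y) (T y)"
      using positive_opD(3)[OF assms(2), of "T y" y]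
      by (simp add: inner_diff_left linear_diff[OF lin] linear_scale[OF lin])
    finally show ?case using positive_op_inner_image_le[OF assms(2), of y] by simp
  next
    case (add p p')
    then show ?case by (simp add: poly_op_add inner_add_left)
  }
qed

text \<open>The operator version of \<open>\<bar>p\<bar> \<le> M\<close>: the polynomial \<open>M\<^sup>2 - p\<^sup>2\<close> lies in \<open>Icc_cone\<close>.\<close>

lemma norm_poly_op_le:
  assumes "0 < onorm T" "positive_op T" and bound: "\<forall>t\<in>{0..onorm T}. \<bar>poly p t\<bar> \<le> M"
  shows "norm (poly_op p T x) \<le> M * norm x"
proof -
  note lin = positive_opD(2)[OF assms(2)]
  have "0 \<in> {0..onorm T}" using assms(1) by simp
  with bound have "0 \<le> M" by (auto intro: order.trans[OF abs_ge_zero])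
  have "\<forall>t\<in>{0..onorm T}. 0 \<le> poly ([:M * M:] - p * p) t"
  proof
    fix t assume "t \<in> {0..onorm T}"
    then have "\<bar>poly p t\<bar> * \<bar>poly p t\<bar> \<le> M * M"
      using bound \<open>0 \<le> M\<close> by (intro mult_mono) auto
    then show "0 \<le> poly ([:M * M:] - p * p) t" by simp
  qed
  then have "Icc_cone (onorm T) ([:M * M:] - p * p)"
    by (rule nonneg_on_Icc_imp_Icc_cone[OF assms(1)])
  then have "0 \<le> inner (poly_op ([:M * M:] - p * p) T x) x"
    by (rule Icc_cone_poly_op_nonneg[OF _ assms(2)])
  also have "\<dots> = M * M * inner x x - inner (poly_op p T x) (poly_op p T x)"
    using poly_op_selfadjoint[OF positive_opD(3)[OF assms(2)], of p "poly_op p T x" x]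
    by (simp add: poly_op_diff poly_op_const poly_op_mult[OF lin] inner_diff_left)
  finally have "(norm (poly_op p T x))\<^sup>2 \<le> (M * norm x)\<^sup>2"
    unfolding power_mult_distrib power2_norm_eq_inner by (simp add: power2_eq_square)
  then show ?thesis by (rule power2_le_imp_le) (use \<open>0 \<le> M\<close> in simp)
qed

section \<open>Continuous functional calculus\<close>

lemma Weierstrass_poly_approx:
  fixes f :: "real \<Rightarrow> real"
  assumes "continuous_on {a..b} f" "0 < e"
  obtains p where "\<forall>t\<in>{a..b}. \<bar>poly p t - f t\<bar> \<le> e"
proof -
  obtain g where g: "real_polynomial_function g" "\<And>t. t \<in> {a..b} \<Longrightarrow> \<bar>f t - g t\<bar> < e"
    using Stone_Weierstrass_real_polynomial_function[OF compact_Icc assms] by blast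
  obtain c n where "g = (\<lambda>t. \<Sum>i\<le>n. c i * t ^ i)"
    using real_polynomial_function_imp_sum[OF g(1)] by blast
  then have "poly (\<Sum>i\<le>n. monom (c i) i) t = g t" for t
    by (simp add: poly_sum poly_monom)
  then have "\<bar>poly (\<Sum>i\<le>n. monom (c i) i) t - f t\<bar> \<le> e" if "t \<in> {a..b}" for t
    using g(2)[OF that] by (simp add: abs_minus_commute)
  with that show ?thesis by blast
qed

lemma continuous_on_Icc_abs_bound:
  fixes f :: "real \<Rightarrow> real"
  assumes "continuous_on {a..b} f"
  obtains M where "0 \<le> M" "\<forall>t\<in>{a..b}. \<bar>f t\<bar> \<le> M"
proof -
  obtain M where "\<forall>y\<in>f ` {a..b}. \<bar>y\<bar> \<le> M"
    using compact_imp_bounded[OF compact_continuous_image[OF assms compact_Icc]]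
    by (auto simp: bounded_real)
  then have "\<forall>t\<in>{a..b}. \<bar>f t\<bar> \<le> max 0 M" by auto
  then show ?thesis by (intro that[of "max 0 M"]) auto
qed

lemma abs_mult_approx_le:
  fixes a b f g d :: real
  assumes "\<bar>a - f\<bar> \<le> d" "\<bar>b - g\<bar> \<le> d" "\<bar>f\<bar> \<le> Mf" "\<bar>g\<bar> \<le> Mg" "d \<le> 1"
  shows "\<bar>a * b - f * g\<bar> \<le> d * (Mf + Mg + 1)"
proof -
  have "\<bar>a * b - f * g\<bar> = \<bar>a * (b - g) + g * (a - f)\<bar>" by (simp add: algebra_simps)
  also have "\<dots> \<le> \<bar>a\<bar> * \<bar>b - g\<bar> + \<bar>g\<bar> * \<bar>a - f\<bar>"
    by (rule order.trans[OF abs_triangle_ineq]) (simp add: abs_mult)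
  also have "\<dots> \<le> (Mf + 1) * d + Mg * d"
    using assms by (intro add_mono mult_mono) auto
  finally show ?thesis by (simp add: algebra_simps)
qed

lemma Cauchy_if_dist_le_null:
  fixes X :: "nat \<Rightarrow> 'a::metric_space"
  assumes dist: "\<And>m n. dist (X m) (X n) \<le> e m + e n" and "e \<longlonglongrightarrow> 0"
  shows "Cauchy X"
proof (rule metric_CauchyI)
  fix \<epsilon> :: real assume "0 < \<epsilon>"
  then obtain N where N: "\<And>n. N \<le> n \<Longrightarrow> \<bar>e n\<bar> < \<epsilon> / 2"
    using LIMSEQ_D[OF \<open>e \<longlonglongrightarrow> 0\<close>, of "\<epsilon> / 2"] by auto
  have "dist (X m) (X n) < \<epsilon>" if "N \<le> m" "N \<le> n" for m n
    using dist[of m n] N[OF that(1)] N[OF that(2)] by linarith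
  then show "\<exists>N. \<forall>m\<ge>N. \<forall>n\<ge>N. dist (X m) (X n) < \<epsilon>" by blast
qed

lemma le_0_if_le_eps_mult:
  fixes a b :: real
  assumes "\<And>e. 0 < e \<Longrightarrow> a \<le> e * b" "0 \<le> b"
  shows "a \<le> 0"
proof (rule ccontr)
  assume "\<not> a \<le> 0"
  moreover have "0 < a / (2 * (b + 1))" using \<open>\<not> a \<le> 0\<close> assms(2) by simp
  ultimately have "a \<le> a / (2 * (b + 1)) * b" using assms(1) by blast
  also have "\<dots> = a * (b / (2 * (b + 1)))" by simp
  also have "\<dots> < a * 1"
    using \<open>\<not> a \<le> 0\<close> assms(2) by (intro mult_strict_left_mono) (auto simp: field_simps)
  finally show False by simp
qed

lemma bounded_linear_pointwise_limit:
  assumes "\<And>n. linear (F n)" and lim: "\<And>x. (\<lambda>n. F n x) \<longlonglongrightarrow> S x"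
    and "\<And>x. norm (S x) \<le> norm x * M"
  shows "bounded_linear S"
proof (rule bounded_linear_intro)
  show "S (x + y) = S x + S y" for x y
    using LIMSEQ_unique[OF lim[of "x + y"]] tendsto_add[OF lim lim] assms(1)
    by (simp add: linear_add)
  show "S (r *\<^sub>R x) = r *\<^sub>R S x" for r x
    using LIMSEQ_unique[OF lim[of "r *\<^sub>R x"]] tendsto_scaleR[OF tendsto_const lim] assms(1)
    by (simp add: linear_scale)
qed (fact assms(3))

lemma fcalc_cong:
  assumes "\<forall>t\<in>{0..onorm T}. f t = g t"
  shows "fcalc f T = fcalc g T"
proof -
  have "(\<forall>t\<in>{0..onorm T}. \<bar>poly p t - f t\<bar> < \<delta>) = (\<forall>t\<in>{0..onorm T}. \<bar>poly p t - g t\<bar> < \<delta>)" for p \<delta>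
    using assms by auto
  then show ?thesis unfolding fcalc_def by simp
qed

locale nonzero_positive_op =
  fixes T :: "'a::{real_inner,complete_space} \<Rightarrow> 'a"
  assumes positive: "positive_op T" and onorm_pos: "0 < onorm T"
begin

lemmas bounded_linear_T = positive_opD(1)[OF positive]
  and linear_T = positive_opD(2)[OF positive]
  and selfadjoint_T = positive_opD(3)[OF positive]

lemma linear_poly_op: "linear (poly_op p T)"
  by (rule bounded_linear.linear[OF bounded_linear_poly_op[OF bounded_linear_T]])

lemma norm_poly_op_diff_le:
  assumes "\<forall>t\<in>{0..onorm T}. \<bar>poly p t - f t\<bar> \<le> a" "\<forall>t\<in>{0..onorm T}. \<bar>poly q t - f t\<bar> \<le> b"
  shows "norm (poly_op p T x - poly_op q T x) \<le> (a + b) * norm x"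
proof -
  have "\<forall>t\<in>{0..onorm T}. \<bar>poly (p - q) t\<bar> \<le> a + b"
  proof
    fix t assume "t \<in> {0..onorm T}"
    then have "\<bar>poly p t - f t\<bar> \<le> a" "\<bar>poly q t - f t\<bar> \<le> b" using assms by auto
    then show "\<bar>poly (p - q) t\<bar> \<le> a + b" by simp
  qed
  from norm_poly_op_le[OF onorm_pos positive this] show ?thesis by (simp add: poly_op_diff)
qed

lemma poly_op_limit_exists:
  assumes f: "continuous_on {0..onorm T} f"
  obtains S where "bounded_linear S"
    "\<And>p \<eta> x. \<forall>t\<in>{0..onorm T}. \<bar>poly p t - f t\<bar> \<le> \<eta> \<Longrightarrow> norm (S x - poly_op p T x) \<le> \<eta> * norm x"
proof -
  have "\<exists>p. \<forall>t\<in>{0..onorm T}. \<bar>poly p t - f t\<bar> \<le> inverse (Suc n)" for n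
  proof -
    have "0 < inverse (real (Suc n))" by simp
    then show ?thesis using Weierstrass_poly_approx[OF f] by blast
  qed
  then obtain P where P: "\<And>n. \<forall>t\<in>{0..onorm T}. \<bar>poly (P n) t - f t\<bar> \<le> inverse (Suc n)"
    by metis
  have Cauchy: "Cauchy (\<lambda>n. poly_op (P n) T x)" for x
  proof (rule Cauchy_if_dist_le_null)
    show "dist (poly_op (P m) T x) (poly_op (P n) T x)
        \<le> inverse (Suc m) * norm x + inverse (Suc n) * norm x"
      for m n using norm_poly_op_diff_le[OF P P] by (simp add: dist_norm distrib_right)
    show "(\<lambda>n. inverse (Suc n) * norm x) \<longlonglongrightarrow> 0"
      by (intro tendsto_mult_left_zero LIMSEQ_inverse_real_of_nat)
  qed
  define S where "S x = lim (\<lambda>n. poly_op (P n) T x)" for x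
  have lim: "(\<lambda>n. poly_op (P n) T x) \<longlonglongrightarrow> S x" for x
    unfolding S_def using Cauchy_convergent[OF Cauchy] by (simp add: convergent_LIMSEQ_iff)
  have approx: "norm (S x - poly_op p T x) \<le> \<eta> * norm x"
    if "\<forall>t\<in>{0..onorm T}. \<bar>poly p t - f t\<bar> \<le> \<eta>" for p \<eta> x
  proof (rule tendsto_le[OF trivial_limit_sequentially])
    show "(\<lambda>n. (inverse (Suc n) + \<eta>) * norm x) \<longlonglongrightarrow> \<eta> * norm x"
      using tendsto_mult[OF tendsto_add[OF LIMSEQ_inverse_real_of_nat tendsto_const] tendsto_const]
      by simp
    show "(\<lambda>n. norm (poly_op (P n) T x - poly_op p T x)) \<longlonglongrightarrow> norm (S x - poly_op p T x)"
      by (intro tendsto_intros lim)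
    show "\<forall>\<^sub>F n in sequentially.
        norm (poly_op (P n) T x - poly_op p T x) \<le> (inverse (Suc n) + \<eta>) * norm x"
      using norm_poly_op_diff_le[OF P that] by simp
  qed
  obtain M where "\<forall>t\<in>{0..onorm T}. \<bar>f t\<bar> \<le> M"
    using continuous_on_Icc_abs_bound[OF f] by blast
  then have bound: "norm (S x) \<le> norm x * M" for x
    using approx[of 0 M x] by (simp add: mult.commute)
  have "bounded_linear S"
    by (intro bounded_linear_pointwise_limit[where F = "\<lambda>n. poly_op (P n) T" and M = M]
        linear_poly_op lim bound)
  with approx that show ?thesis by blast
qed

lemma poly_op_approx_unique:
  assumes f: "continuous_on {0..onorm T} f" and "bounded_linear S'"
    and S': "\<And>\<epsilon>. 0 < \<epsilon> \<Longrightarrow> \<exists>\<delta>>0. \<forall>p.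
      (\<forall>t\<in>{0..onorm T}. \<bar>poly p t - f t\<bar> < \<delta>) \<longrightarrow> onorm (\<lambda>x. S' x - poly_op p T x) \<le> \<epsilon>"
    and approx: "\<And>p \<eta> x. \<forall>t\<in>{0..onorm T}. \<bar>poly p t - f t\<bar> \<le> \<eta> \<Longrightarrow>
      norm (S x - poly_op p T x) \<le> \<eta> * norm x"
  shows "S' = S"
proof
  fix x
  have "norm (S' x - S x) \<le> 0"
  proof (rule le_0_if_le_eps_mult)
    fix \<epsilon> :: real assume "0 < \<epsilon>"
    then obtain \<delta> where "0 < \<delta>" and \<delta>: "\<And>p. \<forall>t\<in>{0..onorm T}. \<bar>poly p t - f t\<bar> < \<delta> \<Longrightarrow>
        onorm (\<lambda>x. S' x - poly_op p T x) \<le> \<epsilon>"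
      using S' by blast
    obtain p where p: "\<forall>t\<in>{0..onorm T}. \<bar>poly p t - f t\<bar> \<le> min (\<delta> / 2) \<epsilon>"
      using Weierstrass_poly_approx[OF f, of "min (\<delta> / 2) \<epsilon>"] \<open>0 < \<delta>\<close> \<open>0 < \<epsilon>\<close> by auto
    have "bounded_linear (\<lambda>x. S' x - poly_op p T x)"
      using \<open>bounded_linear S'\<close> bounded_linear_poly_op[OF bounded_linear_T]
      by (rule bounded_linear_sub)
    then have "norm (S' x - poly_op p T x) \<le> onorm (\<lambda>x. S' x - poly_op p T x) * norm x"
      by (rule onorm)
    also have "\<dots> \<le> \<epsilon> * norm x"
    proof (intro mult_right_mono \<delta> ballI)
      fix t assume "t \<in> {0..onorm T}"
      then have "\<bar>poly p t - f t\<bar> \<le> \<delta> / 2" using p by auto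
      then show "\<bar>poly p t - f t\<bar> < \<delta>" using \<open>0 < \<delta>\<close> by linarith
    qed simp
    finally have "norm (S' x - poly_op p T x) \<le> \<epsilon> * norm x" .
    moreover have "norm (S x - poly_op p T x) \<le> \<epsilon> * norm x"
      using p by (intro approx) auto
    ultimately show "norm (S' x - S x) \<le> \<epsilon> * (2 * norm x)"
      using norm_triangle_ineq4[of "S' x - poly_op p T x" "S x - poly_op p T x"] by simp
  qed simp
  then show "S' x = S x" by simp
qed

lemma fcalc_unique:
  assumes f: "continuous_on {0..onorm T} f" and "bounded_linear S"
    and approx: "\<And>p \<eta> x. \<forall>t\<in>{0..onorm T}. \<bar>poly p t - f t\<bar> \<le> \<eta> \<Longrightarrow>
      norm (S x - poly_op p T x) \<le> \<eta> * norm x"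
  shows "fcalc f T = S"
  unfolding fcalc_def
proof (rule the_equality)
  have "onorm (\<lambda>x. S x - poly_op p T x) \<le> \<epsilon>"
    if "0 < \<epsilon>" "\<forall>t\<in>{0..onorm T}. \<bar>poly p t - f t\<bar> < \<epsilon>" for p \<epsilon>
    using that by (intro onorm_bound approx) (auto intro: less_imp_le)
  with \<open>bounded_linear S\<close> show "bounded_linear S \<and> (\<forall>\<epsilon>>0. \<exists>\<delta>>0. \<forall>p.
      (\<forall>t\<in>{0..onorm T}. \<bar>poly p t - f t\<bar> < \<delta>) \<longrightarrow> onorm (\<lambda>x. S x - poly_op p T x) \<le> \<epsilon>)"
    by blast
qed (use poly_op_approx_unique[OF f _ _ approx] in blast)

context
  fixes f :: "real \<Rightarrow> real"
  assumes f: "continuous_on {0..onorm T} f"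
begin

lemma bounded_linear_fcalc: "bounded_linear (fcalc f T)"
  and norm_fcalc_minus_poly_op_le:
    "\<forall>t\<in>{0..onorm T}. \<bar>poly p t - f t\<bar> \<le> \<eta> \<Longrightarrow> norm (fcalc f T x - poly_op p T x) \<le> \<eta> * norm x"
proof -
  obtain S where S: "bounded_linear S" "\<And>p \<eta> x. \<forall>t\<in>{0..onorm T}. \<bar>poly p t - f t\<bar> \<le> \<eta> \<Longrightarrow>
      norm (S x - poly_op p T x) \<le> \<eta> * norm x"
    using poly_op_limit_exists[OF f] by blast
  have "fcalc f T = S" by (rule fcalc_unique[OF f S])
  with S show "bounded_linear (fcalc f T)"
    "\<forall>t\<in>{0..onorm T}. \<bar>poly p t - f t\<bar> \<le> \<eta> \<Longrightarrow> norm (fcalc f T x - poly_op p T x) \<le> \<eta> * norm x"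
    by simp_all
qed

lemma norm_fcalc_le:
  assumes "\<forall>t\<in>{0..onorm T}. \<bar>f t\<bar> \<le> M"
  shows "norm (fcalc f T x) \<le> M * norm x"
  using norm_fcalc_minus_poly_op_le[of 0 M x] assms by simp

lemma fcalc_eqI:
  assumes "0 \<le> C" and approx: "\<And>\<epsilon>. 0 < \<epsilon> \<Longrightarrow>
    \<exists>p. (\<forall>t\<in>{0..onorm T}. \<bar>poly p t - f t\<bar> \<le> \<epsilon>) \<and> norm (y - poly_op p T x) \<le> \<epsilon> * C"
  shows "fcalc f T x = y"
proof -
  have "norm (fcalc f T x - y) \<le> 0"
  proof (rule le_0_if_le_eps_mult)
    fix \<epsilon> :: real assume "0 < \<epsilon>"
    then obtain p where p: "\<forall>t\<in>{0..onorm T}. \<bar>poly p t - f t\<bar> \<le> \<epsilon>"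
      "norm (y - poly_op p T x) \<le> \<epsilon> * C"
      using approx by blast
    have "norm (fcalc f T x - y) \<le> norm (fcalc f T x - poly_op p T x) + norm (y - poly_op p T x)"
      using norm_triangle_ineq4[of "fcalc f T x - poly_op p T x" "y - poly_op p T x"] by simp
    also have "\<dots> \<le> \<epsilon> * norm x + \<epsilon> * C"
      using norm_fcalc_minus_poly_op_le[OF p(1)] p(2) by (rule add_mono)
    finally show "norm (fcalc f T x - y) \<le> \<epsilon> * (norm x + C)" by (simp add: algebra_simps)
  qed (use \<open>0 \<le> C\<close> in simp)
  then show ?thesis by simp
qed

end

lemma fcalc_poly: "fcalc (poly p) T x = poly_op p T x"
  using norm_fcalc_minus_poly_op_le[of "poly p" p 0 x]
  by (simp add: continuous_on_poly continuous_on_id)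

lemma fcalc_id: "fcalc (\<lambda>t. t) T x = T x"
proof -
  have "fcalc (\<lambda>t. t) T = fcalc (poly [:0, 1:]) T" by (rule fcalc_cong) simp
  then show ?thesis using fcalc_poly poly_op_X[OF linear_T] by simp
qed

lemma fcalc_const: "fcalc (\<lambda>t. c) T x = c *\<^sub>R x"
proof -
  have "fcalc (\<lambda>t. c) T = fcalc (poly [:c:]) T" by (rule fcalc_cong) simp
  then show ?thesis using fcalc_poly poly_op_const by simp
qed

context
  fixes f g :: "real \<Rightarrow> real"
  assumes f: "continuous_on {0..onorm T} f" and g: "continuous_on {0..onorm T} g"
begin

lemma fcalc_add: "fcalc (\<lambda>t. f t + g t) T x = fcalc f T x + fcalc g T x"
proof (rule fcalc_eqI)
  show "continuous_on {0..onorm T} (\<lambda>t. f t + g t)" using f g by (intro continuous_intros)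
  fix \<epsilon> :: real assume "0 < \<epsilon>"
  then have "0 < \<epsilon> / 2" by simp
  obtain p where p: "\<forall>t\<in>{0..onorm T}. \<bar>poly p t - f t\<bar> \<le> \<epsilon> / 2"
    using Weierstrass_poly_approx[OF f \<open>0 < \<epsilon> / 2\<close>] by blast
  obtain q where q: "\<forall>t\<in>{0..onorm T}. \<bar>poly q t - g t\<bar> \<le> \<epsilon> / 2"
    using Weierstrass_poly_approx[OF g \<open>0 < \<epsilon> / 2\<close>] by blast
  have "\<forall>t\<in>{0..onorm T}. \<bar>poly (p + q) t - (f t + g t)\<bar> \<le> \<epsilon>"
  proof
    fix t assume "t \<in> {0..onorm T}"
    then have "\<bar>poly p t - f t\<bar> \<le> \<epsilon> / 2" "\<bar>poly q t - g t\<bar> \<le> \<epsilon> / 2" using p q by auto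
    moreover have "\<bar>poly (p + q) t - (f t + g t)\<bar> \<le> \<bar>poly p t - f t\<bar> + \<bar>poly q t - g t\<bar>"
      using abs_triangle_ineq[of "poly p t - f t" "poly q t - g t"] by (simp add: algebra_simps)
    ultimately show "\<bar>poly (p + q) t - (f t + g t)\<bar> \<le> \<epsilon>" by linarith
  qed
  moreover have "norm (fcalc f T x + fcalc g T x - poly_op (p + q) T x)
      \<le> norm (fcalc f T x - poly_op p T x) + norm (fcalc g T x - poly_op q T x)"
    using norm_triangle_ineq[of "fcalc f T x - poly_op p T x" "fcalc g T x - poly_op q T x"]
    by (simp add: poly_op_add algebra_simps)
  ultimately show "\<exists>r. (\<forall>t\<in>{0..onorm T}. \<bar>poly r t - (f t + g t)\<bar> \<le> \<epsilon>) \<and>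
      norm (fcalc f T x + fcalc g T x - poly_op r T x) \<le> \<epsilon> * norm x"
    using norm_fcalc_minus_poly_op_le[OF f p, of x] norm_fcalc_minus_poly_op_le[OF g q, of x]
    by (intro exI[of _ "p + q"]) auto
qed simp

lemma norm_fcalc_fcalc_minus_poly_op_le:
  assumes p: "\<forall>t\<in>{0..onorm T}. \<bar>poly p t - f t\<bar> \<le> d" and q: "\<forall>t\<in>{0..onorm T}. \<bar>poly q t - g t\<bar> \<le> e"
    and p_bound: "\<forall>t\<in>{0..onorm T}. \<bar>poly p t\<bar> \<le> Mp" and g_bound: "\<forall>t\<in>{0..onorm T}. \<bar>g t\<bar> \<le> Mg"
    and "0 \<le> d"
  shows "norm (fcalc f T (fcalc g T x) - poly_op (p * q) T x) \<le> (d * Mg + Mp * e) * norm x"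
proof -
  define y where "y = fcalc g T x"
  have "0 \<le> Mp"
    using p_bound[rule_format, of 0] onorm_pos by (auto intro: order.trans[OF abs_ge_zero])
  have "norm (fcalc f T y - poly_op (p * q) T x)
      \<le> norm (fcalc f T y - poly_op p T y) + norm (poly_op p T (y - poly_op q T x))"
    using norm_triangle_ineq[of "fcalc f T y - poly_op p T y" "poly_op p T (y - poly_op q T x)"]
    by (simp add: poly_op_mult[OF linear_T] linear_diff[OF linear_poly_op])
  also have "\<dots> \<le> d * norm y + Mp * norm (y - poly_op q T x)"
    using norm_fcalc_minus_poly_op_le[OF f p] norm_poly_op_le[OF onorm_pos positive p_bound]
    by (rule add_mono)
  also have "\<dots> \<le> d * (Mg * norm x) + Mp * (e * norm x)"
    using norm_fcalc_le[OF g g_bound, of x] norm_fcalc_minus_poly_op_le[OF g q, of x]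
      \<open>0 \<le> d\<close> \<open>0 \<le> Mp\<close>
    unfolding y_def by (intro add_mono mult_left_mono)
  finally show ?thesis by (simp add: y_def algebra_simps)
qed

lemma fcalc_mult: "fcalc (\<lambda>t. f t * g t) T x = fcalc f T (fcalc g T x)"
proof (rule fcalc_eqI)
  show "continuous_on {0..onorm T} (\<lambda>t. f t * g t)" using f g by (intro continuous_intros)
  obtain Mf where "0 \<le> Mf" and Mf: "\<forall>t\<in>{0..onorm T}. \<bar>f t\<bar> \<le> Mf"
    by (rule continuous_on_Icc_abs_bound[OF f])
  obtain Mg where "0 \<le> Mg" and Mg: "\<forall>t\<in>{0..onorm T}. \<bar>g t\<bar> \<le> Mg"
    by (rule continuous_on_Icc_abs_bound[OF g])
  fix \<epsilon> :: real assume "0 < \<epsilon>"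
  define d where "d = min 1 (\<epsilon> / (Mf + Mg + 1))"
  have "0 < d" "d \<le> 1" "d * (Mf + Mg + 1) \<le> \<epsilon>"
    using \<open>0 < \<epsilon>\<close> \<open>0 \<le> Mf\<close> \<open>0 \<le> Mg\<close> by (auto simp: d_def pos_le_divide_eq[symmetric])
  obtain p where p: "\<forall>t\<in>{0..onorm T}. \<bar>poly p t - f t\<bar> \<le> d"
    using Weierstrass_poly_approx[OF f \<open>0 < d\<close>] by blast
  obtain q where q: "\<forall>t\<in>{0..onorm T}. \<bar>poly q t - g t\<bar> \<le> d"
    using Weierstrass_poly_approx[OF g \<open>0 < d\<close>] by blast
  have "\<forall>t\<in>{0..onorm T}. \<bar>poly p t\<bar> \<le> Mf + 1"
  proof
    fix t assume "t \<in> {0..onorm T}"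
    then have "\<bar>poly p t - f t\<bar> \<le> d" "\<bar>f t\<bar> \<le> Mf" using p Mf by auto
    then show "\<bar>poly p t\<bar> \<le> Mf + 1" using \<open>d \<le> 1\<close> by linarith
  qed
  then have "norm (fcalc f T (fcalc g T x) - poly_op (p * q) T x)
      \<le> (d * Mg + (Mf + 1) * d) * norm x"
    by (intro norm_fcalc_fcalc_minus_poly_op_le p q Mg less_imp_le[OF \<open>0 < d\<close>])
  also have "\<dots> \<le> \<epsilon> * norm x"
    using \<open>d * (Mf + Mg + 1) \<le> \<epsilon>\<close> by (intro mult_right_mono) (simp_all add: algebra_simps)
  finally have "norm (fcalc f T (fcalc g T x) - poly_op (p * q) T x) \<le> \<epsilon> * norm x" .
  moreover have "\<bar>poly (p * q) t - f t * g t\<bar> \<le> \<epsilon>" if "t \<in> {0..onorm T}" for t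
    using abs_mult_approx_le[of "poly p t" "f t" d "poly q t" "g t" Mf Mg] that p q Mf Mg \<open>d \<le> 1\<close>
      \<open>d * (Mf + Mg + 1) \<le> \<epsilon>\<close>
    by auto
  ultimately show "\<exists>r. (\<forall>t\<in>{0..onorm T}. \<bar>poly r t - f t * g t\<bar> \<le> \<epsilon>) \<and>
      norm (fcalc f T (fcalc g T x) - poly_op r T x) \<le> \<epsilon> * norm x"
    by blast
qed simp

end

lemma fcalc_scaleR:
  assumes "continuous_on {0..onorm T} f"
  shows "fcalc (\<lambda>t. c * f t) T x = c *\<^sub>R fcalc f T x"
  using fcalc_mult[OF continuous_on_const assms, of c x] by (simp add: fcalc_const)

lemma fcalc_diff:
  assumes "continuous_on {0..onorm T} f" "continuous_on {0..onorm T} g"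
  shows "fcalc (\<lambda>t. f t - g t) T x = fcalc f T x - fcalc g T x"
  using fcalc_add[OF assms(1) continuous_on_mult[OF continuous_on_const assms(2)], of "-1" x]
    fcalc_scaleR[OF assms(2), of "-1" x]
  by simp

lemma fcalc_selfadjoint:
  assumes f: "continuous_on {0..onorm T} f"
  shows "inner (fcalc f T x) y = inner x (fcalc f T y)"
proof -
  have "\<bar>inner (fcalc f T x) y - inner x (fcalc f T y)\<bar> \<le> 0"
  proof (rule le_0_if_le_eps_mult)
    fix \<epsilon> :: real assume "0 < \<epsilon>"
    then obtain p where p: "\<forall>t\<in>{0..onorm T}. \<bar>poly p t - f t\<bar> \<le> \<epsilon>"
      using Weierstrass_poly_approx[OF f] by blast
    have "inner (fcalc f T x) y - inner x (fcalc f T y)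
        = inner (fcalc f T x - poly_op p T x) y - inner x (fcalc f T y - poly_op p T y)"
      using poly_op_selfadjoint[OF selfadjoint_T, of p x y]
      by (simp add: inner_diff_left inner_diff_right)
    also have "\<bar>\<dots>\<bar>
        \<le> norm (fcalc f T x - poly_op p T x) * norm y + norm x * norm (fcalc f T y - poly_op p T y)"
      by (intro order.trans[OF abs_triangle_ineq4] add_mono Cauchy_Schwarz_ineq2)
    also have "\<dots> \<le> (\<epsilon> * norm x) * norm y + norm x * (\<epsilon> * norm y)"
      using norm_fcalc_minus_poly_op_le[OF f p]
      by (intro add_mono mult_right_mono mult_left_mono) auto
    finally show "\<bar>inner (fcalc f T x) y - inner x (fcalc f T y)\<bar> \<le> \<epsilon> * (2 * norm x * norm y)"
      by (simp add: algebra_simps)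
  qed simp
  then show ?thesis by simp
qed

lemma positive_op_fcalc:
  assumes f: "continuous_on {0..onorm T} f" and nonneg: "\<forall>t\<in>{0..onorm T}. 0 \<le> f t"
  shows "positive_op (fcalc f T)"
  unfolding positive_op_def
proof (intro conjI allI bounded_linear_fcalc[OF f] fcalc_selfadjoint[OF f])
  fix x
  have sqrt_f: "continuous_on {0..onorm T} (\<lambda>t. sqrt (f t))" using f by (intro continuous_intros)
  have "fcalc f T = fcalc (\<lambda>t. sqrt (f t) * sqrt (f t)) T" by (rule fcalc_cong) (use nonneg in auto)
  then have "inner (fcalc f T x) x
      = inner (fcalc (\<lambda>t. sqrt (f t)) T x) (fcalc (\<lambda>t. sqrt (f t)) T x)"
    using fcalc_mult[OF sqrt_f sqrt_f] fcalc_selfadjoint[OF sqrt_f] by simp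
  then show "0 \<le> inner (fcalc f T x) x" by simp
qed

end

section \<open>Powers, composition and the resolvent\<close>

lemma continuous_on_powr_const:
  "0 < b \<Longrightarrow> continuous_on {0..a} (\<lambda>t::real. t powr b)"
  by (rule continuous_on_powr') (auto intro: continuous_intros)

context nonzero_positive_op
begin

lemma fcalc_powr_add:
  assumes "0 < b" "0 < c"
  shows "fcalc (\<lambda>t. t powr (b + c)) T x = fcalc (\<lambda>t. t powr b) T (fcalc (\<lambda>t. t powr c) T x)"
  using fcalc_mult[OF continuous_on_powr_const continuous_on_powr_const, OF assms]
  by (simp add: powr_add)

lemma fcalc_powr_1: "fcalc (\<lambda>t. t powr 1) T = T"
proof -
  have "fcalc (\<lambda>t. t powr 1) T = fcalc (\<lambda>t. t) T" by (rule fcalc_cong) auto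
  then show ?thesis using fcalc_id by auto
qed

lemma bounded_linear_fcalc_powr: "0 < b \<Longrightarrow> bounded_linear (fcalc (\<lambda>t. t powr b) T)"
  by (rule bounded_linear_fcalc[OF continuous_on_powr_const])

lemma onorm_fcalc_powr_le: "0 < b \<Longrightarrow> onorm (fcalc (\<lambda>t. t powr b) T) \<le> onorm T powr b"
  by (intro onorm_bound norm_fcalc_le continuous_on_powr_const) (auto intro: powr_mono2)

lemma onorm_fcalc_powr_add_le:
  assumes "0 < b" "0 < c"
  shows "onorm (fcalc (\<lambda>t. t powr (b + c)) T)
    \<le> onorm (fcalc (\<lambda>t. t powr b) T) * onorm (fcalc (\<lambda>t. t powr c) T)"
proof (rule onorm_bound)
  note bl = bounded_linear_fcalc_powr[OF assms(1)] bounded_linear_fcalc_powr[OF assms(2)]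
  show "0 \<le> onorm (fcalc (\<lambda>t. t powr b) T) * onorm (fcalc (\<lambda>t. t powr c) T)"
    using bl by (intro mult_nonneg_nonneg onorm_pos_le)
  fix x
  have "norm (fcalc (\<lambda>t. t powr (b + c)) T x)
      \<le> onorm (fcalc (\<lambda>t. t powr b) T) * norm (fcalc (\<lambda>t. t powr c) T x)"
    unfolding fcalc_powr_add[OF assms] by (rule onorm[OF bl(1)])
  also have "\<dots> \<le> onorm (fcalc (\<lambda>t. t powr b) T) * (onorm (fcalc (\<lambda>t. t powr c) T) * norm x)"
    using bl by (intro mult_left_mono onorm onorm_pos_le)
  finally show "norm (fcalc (\<lambda>t. t powr (b + c)) T x)
      \<le> onorm (fcalc (\<lambda>t. t powr b) T) * onorm (fcalc (\<lambda>t. t powr c) T) * norm x"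
    by (simp only: mult.assoc)
qed

lemma onorm_fcalc_powr_square_le:
  assumes "0 < b"
  shows "(onorm (fcalc (\<lambda>t. t powr b) T))\<^sup>2 \<le> onorm (fcalc (\<lambda>t. t powr (2 * b)) T)"
proof -
  define S where "S = fcalc (\<lambda>t. t powr b) T"
  define N where "N = onorm (fcalc (\<lambda>t. t powr (2 * b)) T)"
  have bl2: "bounded_linear (fcalc (\<lambda>t. t powr (2 * b)) T)"
    using assms by (intro bounded_linear_fcalc_powr) simp
  then have "0 \<le> N" unfolding N_def by (rule onorm_pos_le)
  have "norm (S x) \<le> sqrt N * norm x" for x
  proof (rule power2_le_imp_le)
    have "(norm (S x))\<^sup>2 = inner (S (S x)) x"
      unfolding S_def power2_norm_eq_inner
      by (rule fcalc_selfadjoint[OF continuous_on_powr_const[OF assms], symmetric])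
    also have "S (S x) = fcalc (\<lambda>t. t powr (2 * b)) T x"
      unfolding S_def mult_2 by (rule fcalc_powr_add[OF assms assms, symmetric])
    also have "inner (fcalc (\<lambda>t. t powr (2 * b)) T x) x
        \<le> norm (fcalc (\<lambda>t. t powr (2 * b)) T x) * norm x"
      by (rule norm_cauchy_schwarz)
    also have "\<dots> \<le> N * norm x * norm x"
      unfolding N_def using onorm[OF bl2, of x] by (rule mult_right_mono) simp
    also have "\<dots> = (sqrt N * norm x)\<^sup>2"
      using \<open>0 \<le> N\<close> by (simp add: power_mult_distrib power2_eq_square)
    finally show "(norm (S x))\<^sup>2 \<le> (sqrt N * norm x)\<^sup>2" .
  qed (use \<open>0 \<le> N\<close> in simp)
  then have "onorm S \<le> sqrt N" by (intro onorm_bound) (use \<open>0 \<le> N\<close> in auto)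
  moreover have "0 \<le> onorm S"
    unfolding S_def using assms by (intro onorm_pos_le bounded_linear_fcalc_powr)
  ultimately have "(onorm S)\<^sup>2 \<le> (sqrt N)\<^sup>2" by (rule power_mono)
  then show ?thesis using \<open>0 \<le> N\<close> by (simp add: S_def N_def)
qed

text \<open>Squaring handles the exponents \<open>2 ^ k\<close>; for \<open>s < 2 ^ k\<close> split off the factor with exponent
  \<open>2 ^ k - s\<close>, whose norm is at most \<open>onorm T powr (2 ^ k - s)\<close>.\<close>

lemma onorm_powr_le_onorm_fcalc_powr:
  assumes "0 < s"
  shows "onorm T powr s \<le> onorm (fcalc (\<lambda>t. t powr s) T)"
proof -
  have dyadic: "onorm T powr (2 ^ k) \<le> onorm (fcalc (\<lambda>t. t powr (2 ^ k)) T)" for k :: nat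
  proof (induction k)
    case 0
    show ?case using fcalc_powr_1 onorm_pos by simp
  next
    case (Suc k)
    have "onorm T powr (2 ^ Suc k) = (onorm T powr (2 ^ k))\<^sup>2"
      by (simp add: powr_add[symmetric] power2_eq_square)
    also have "\<dots> \<le> (onorm (fcalc (\<lambda>t. t powr (2 ^ k)) T))\<^sup>2"
      using Suc.IH by (intro power_mono) auto
    also have "\<dots> \<le> onorm (fcalc (\<lambda>t. t powr (2 ^ Suc k)) T)"
      using onorm_fcalc_powr_square_le[of "2 ^ k"] by simp
    finally show ?case .
  qed
  obtain k :: nat where "s < 2 ^ k" using real_arch_pow[of 2 s] by auto
  define c where "c = 2 ^ k - s"
  have "0 < c" using \<open>s < 2 ^ k\<close> by (simp add: c_def)
  have "onorm T powr s * onorm T powr c = onorm T powr (2 ^ k)"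
    by (simp add: powr_add[symmetric] c_def)
  also have "\<dots> \<le> onorm (fcalc (\<lambda>t. t powr (s + c)) T)" using dyadic[of k] by (simp add: c_def)
  also have "\<dots> \<le> onorm (fcalc (\<lambda>t. t powr s) T) * onorm (fcalc (\<lambda>t. t powr c) T)"
    by (rule onorm_fcalc_powr_add_le[OF assms \<open>0 < c\<close>])
  also have "\<dots> \<le> onorm (fcalc (\<lambda>t. t powr s) T) * onorm T powr c"
    using onorm_fcalc_powr_le[OF \<open>0 < c\<close>] onorm_pos_le[OF bounded_linear_fcalc_powr[OF assms]]
    by (rule mult_left_mono)
  finally show ?thesis using onorm_pos by simp
qed

lemma onorm_fcalc_powr: "0 < s \<Longrightarrow> onorm (fcalc (\<lambda>t. t powr s) T) = onorm T powr s"
  using onorm_fcalc_powr_le onorm_powr_le_onorm_fcalc_powr by (simp add: order_antisym)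

lemma nonzero_positive_op_fcalc_powr:
  assumes "0 < s"
  shows "nonzero_positive_op (fcalc (\<lambda>t. t powr s) T)"
  using positive_op_fcalc[OF continuous_on_powr_const[OF assms]] onorm_fcalc_powr[OF assms]
    onorm_pos
  by unfold_locales auto

lemma poly_op_fcalc:
  assumes g: "continuous_on {0..onorm T} g"
  shows "poly_op p (fcalc g T) y = fcalc (\<lambda>t. poly p (g t)) T y"
proof (induction p arbitrary: y)
  case 0
  show ?case using fcalc_const[of 0 y] by simp
next
  case (pCons a p)
  have poly_g: "continuous_on {0..onorm T} (\<lambda>t. poly p (g t))"
    using g by (intro continuous_intros)
  have "poly_op (pCons a p) (fcalc g T) y
      = fcalc (\<lambda>t. a) T y + fcalc g T (fcalc (\<lambda>t. poly p (g t)) T y)"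
    using poly_op_pCons[OF bounded_linear.linear[OF bounded_linear_fcalc[OF g]]]
    by (simp add: pCons.IH fcalc_const)
  also have "\<dots> = fcalc (\<lambda>t. a + g t * poly p (g t)) T y"
    using g poly_g by (simp add: fcalc_mult fcalc_add continuous_on_mult)
  finally show ?case by simp
qed

lemma fcalc_comp:
  assumes g: "continuous_on {0..onorm T} g" and G: "nonzero_positive_op (fcalc g T)"
    and range: "g ` {0..onorm T} \<subseteq> {0..onorm (fcalc g T)}"
    and h: "continuous_on {0..onorm (fcalc g T)} h"
  shows "fcalc h (fcalc g T) x = fcalc (\<lambda>t. h (g t)) T x"
proof -
  interpret G: nonzero_positive_op "fcalc g T" by (rule G)
  have poly_g: "continuous_on {0..onorm T} (\<lambda>t. poly p (g t))" for p
    using g by (intro continuous_intros)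
  have hg: "continuous_on {0..onorm T} (\<lambda>t. h (g t))"
    using continuous_on_compose2[OF h g range] .
  have "norm (fcalc h (fcalc g T) x - fcalc (\<lambda>t. h (g t)) T x) \<le> 0"
  proof (rule le_0_if_le_eps_mult)
    fix \<epsilon> :: real assume "0 < \<epsilon>"
    then obtain p where p: "\<forall>t\<in>{0..onorm (fcalc g T)}. \<bar>poly p t - h t\<bar> \<le> \<epsilon>"
      using Weierstrass_poly_approx[OF h] by blast
    have "fcalc (\<lambda>t. h (g t)) T x - poly_op p (fcalc g T) x
        = fcalc (\<lambda>t. h (g t) - poly p (g t)) T x"
      using poly_op_fcalc[OF g] fcalc_diff[OF hg poly_g] by simp
    also have "norm \<dots> \<le> \<epsilon> * norm x"
    proof (intro norm_fcalc_le ballI)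
      show "continuous_on {0..onorm T} (\<lambda>t. h (g t) - poly p (g t))"
        using hg poly_g by (rule continuous_on_diff)
      fix t assume "t \<in> {0..onorm T}"
      then have "g t \<in> {0..onorm (fcalc g T)}" using range by blast
      then show "\<bar>h (g t) - poly p (g t)\<bar> \<le> \<epsilon>" using p by (simp add: abs_minus_commute)
    qed
    finally have "norm (fcalc (\<lambda>t. h (g t)) T x - poly_op p (fcalc g T) x) \<le> \<epsilon> * norm x" .
    moreover have "norm (fcalc h (fcalc g T) x - poly_op p (fcalc g T) x) \<le> \<epsilon> * norm x"
      by (rule G.norm_fcalc_minus_poly_op_le[OF h p])
    ultimately show "norm (fcalc h (fcalc g T) x - fcalc (\<lambda>t. h (g t)) T x) \<le> \<epsilon> * (2 * norm x)"
      using norm_triangle_ineq4[of "fcalc h (fcalc g T) x - poly_op p (fcalc g T) x"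
          "fcalc (\<lambda>t. h (g t)) T x - poly_op p (fcalc g T) x"] by simp
  qed simp
  then show ?thesis by simp
qed

lemma fcalc_powr_powr:
  assumes "0 < s" "0 < b"
  shows "fcalc (\<lambda>u. u powr b) (fcalc (\<lambda>t. t powr s) T) = fcalc (\<lambda>t. t powr (s * b)) T"
proof
  fix x
  have "(\<lambda>t. t powr s) ` {0..onorm T} \<subseteq> {0..onorm (fcalc (\<lambda>t. t powr s) T)}"
    using assms(1) by (auto simp: onorm_fcalc_powr intro!: powr_mono2)
  then have "fcalc (\<lambda>u. u powr b) (fcalc (\<lambda>t. t powr s) T) x = fcalc (\<lambda>t. (t powr s) powr b) T x"
    using assms by (intro fcalc_comp continuous_on_powr_const nonzero_positive_op_fcalc_powr)
  then show "fcalc (\<lambda>u. u powr b) (fcalc (\<lambda>t. t powr s) T) x = fcalc (\<lambda>t. t powr (s * b)) T x"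
    by (simp add: powr_powr)
qed

lemma resolv_eq_fcalc:
  assumes "0 < \<alpha>"
  shows "resolv T \<alpha> = fcalc (\<lambda>u. 1 / (u + \<alpha>)) T"
proof -
  define R where "R = fcalc (\<lambda>u. 1 / (u + \<alpha>)) T"
  have cont_R: "continuous_on {0..onorm T} (\<lambda>u. 1 / (u + \<alpha>))"
    using assms by (intro continuous_intros) auto
  have cont_shift: "continuous_on {0..onorm T} (\<lambda>u. u + \<alpha>)" by (intro continuous_intros)
  have shift: "T x + \<alpha> *\<^sub>R x = fcalc (\<lambda>u. u + \<alpha>) T x" for x
    by (simp add: fcalc_add continuous_on_id fcalc_id fcalc_const)
  have one: "fcalc (\<lambda>u. 1 / (u + \<alpha>) * (u + \<alpha>)) T = fcalc (\<lambda>u. 1) T"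
    "fcalc (\<lambda>u. (u + \<alpha>) * (1 / (u + \<alpha>))) T = fcalc (\<lambda>u. 1) T"
    by (rule fcalc_cong, use assms in auto)+
  have left: "R (T x + \<alpha> *\<^sub>R x) = x" for x
  proof -
    have "R (T x + \<alpha> *\<^sub>R x) = fcalc (\<lambda>u. 1 / (u + \<alpha>) * (u + \<alpha>)) T x"
      unfolding shift R_def by (rule fcalc_mult[OF cont_R cont_shift, symmetric])
    then show ?thesis unfolding one fcalc_const by simp
  qed
  have right: "T (R x) + \<alpha> *\<^sub>R R x = x" for x
  proof -
    have "T (R x) + \<alpha> *\<^sub>R R x = fcalc (\<lambda>u. (u + \<alpha>) * (1 / (u + \<alpha>))) T x"
      unfolding shift R_def by (rule fcalc_mult[OF cont_shift cont_R, symmetric])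
    then show ?thesis unfolding one fcalc_const by simp
  qed
  show ?thesis
    unfolding resolv_def R_def[symmetric]
  proof (rule the_equality)
    show "bounded_linear R \<and> (\<forall>x. R (T x + \<alpha> *\<^sub>R x) = x) \<and> (\<forall>x. T (R x) + \<alpha> *\<^sub>R R x = x)"
      using bounded_linear_fcalc[OF cont_R] left right by (simp add: R_def)
  next
    fix R'
    assume "bounded_linear R' \<and> (\<forall>x. R' (T x + \<alpha> *\<^sub>R x) = x) \<and> (\<forall>x. T (R' x) + \<alpha> *\<^sub>R R' x = x)"
    then have R': "R' (T x + \<alpha> *\<^sub>R x) = x" for x by blast
    show "R' = R"
    proof
      fix y
      show "R' y = R y" using R'[of "R y"] right[of y] by simp
    qed
  qed
qed

end

section \<open>The logarithmic source function\<close>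

lemma phi_nonneg: "0 \<le> phi c \<kappa> t"
  by (simp add: phi_def)

lemma phi_eq_0: "t \<le> 0 \<Longrightarrow> phi c \<kappa> t = 0"
  by (simp add: phi_def)

lemma phi_mono:
  assumes "0 < c" "0 < \<kappa>" "0 \<le> u" "u \<le> v" "c * v < 1"
  shows "phi c \<kappa> u \<le> phi c \<kappa> v"
proof (cases "u = 0")
  case False
  then have "0 < u" using assms(3) by simp
  have "c * u \<le> c * v" using assms by simp
  then have "0 < - ln (c * v)" "- ln (c * v) \<le> - ln (c * u)"
    using assms \<open>0 < u\<close> by simp_all
  then show ?thesis
    using \<open>0 < u\<close> assms by (simp add: phi_def powr_mono2')
qed (simp add: phi_eq_0 phi_nonneg)

lemma phi_tendsto_0:
  assumes "0 < c" "0 < \<kappa>"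
  shows "(phi c \<kappa> \<longlongrightarrow> 0) (at_right 0)"
proof -
  have "filterlim (\<lambda>t. - ln c + - ln t) at_top (at_right 0)"
    using ln_at_0
    by (intro filterlim_tendsto_add_at_top[OF tendsto_const]) (simp add: filterlim_uminus_at_bot)
  moreover have "\<forall>\<^sub>F t in at_right 0. - ln c + - ln t = - ln (c * t)"
    using eventually_at_right_real[OF zero_less_one]
    by eventually_elim (use assms(1) in \<open>simp add: ln_mult\<close>)
  ultimately have "filterlim (\<lambda>t. - ln (c * t)) at_top (at_right 0)"
    using filterlim_cong[OF refl refl, of "\<lambda>t. - ln c + - ln t" "\<lambda>t. - ln (c * t)"] by blast
  then have "((\<lambda>t. (- ln (c * t)) powr (- \<kappa>)) \<longlongrightarrow> 0) (at_right 0)"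
    by (rule tendsto_neg_powr[rotated]) (use assms(2) in simp)
  moreover have "\<forall>\<^sub>F t in at_right 0. (- ln (c * t)) powr (- \<kappa>) = phi c \<kappa> t"
    using eventually_at_right_real[OF zero_less_one] by eventually_elim (simp add: phi_def)
  ultimately show ?thesis by (rule Lim_transform_eventually)
qed

lemma isCont_phi:
  assumes "0 < c" "0 < x" "c * x < 1"
  shows "isCont (phi c \<kappa>) x"
proof -
  have "\<forall>\<^sub>F t in nhds x. phi c \<kappa> t = (- ln (c * t)) powr (- \<kappa>)"
    using eventually_nhds_in_open[of "{0<..}" x] assms(2)
    by (auto elim!: eventually_mono simp: phi_def)
  moreover have "isCont (\<lambda>t. (- ln (c * t)) powr (- \<kappa>)) x"
    using assms by (intro continuous_intros) auto
  ultimately show ?thesis by (simp add: isCont_cong)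
qed

lemma continuous_on_phi:
  assumes "0 < c" "0 < \<kappa>" "0 < L" "c * L < 1"
  shows "continuous_on {0..L} (phi c \<kappa>)"
proof (rule continuous_on_IccI)
  have cont: "isCont (phi c \<kappa>) x" if "0 < x" "x \<le> L" for x
    using assms that by (intro isCont_phi) (auto intro: le_less_trans[OF mult_left_mono])
  show "(phi c \<kappa> \<longlongrightarrow> phi c \<kappa> 0) (at_right 0)"
    using phi_tendsto_0[OF assms(1,2)] by (simp add: phi_eq_0)
  show "(phi c \<kappa> \<longlongrightarrow> phi c \<kappa> L) (at_left L)"
    using cont[of L] assms(3) by (simp add: isCont_def filterlim_at_split)
  show "phi c \<kappa> \<midarrow>x\<rightarrow> phi c \<kappa> x" if "0 < x" "x < L" for x
    using cont[of x] that by (simp add: isCont_def)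
qed (fact assms(3))

text \<open>For \<open>\<theta> = 0\<close> the factor \<open>u powr 0\<close> jumps at \<open>0\<close> (as \<open>0 powr 0 = 0\<close>); continuity survives
  because \<open>phi c \<kappa> 0 = 0\<close>.\<close>

lemma continuous_on_powr_mult_phi_div:
  assumes "0 \<le> \<theta>" "0 < \<alpha>" "0 < c" "0 < \<kappa>" "0 < L" "c * L < 1"
  shows "continuous_on {0..L} (\<lambda>u. u powr \<theta> * (phi c \<kappa> u / (u + \<alpha>)))"
proof -
  have phi_div: "continuous_on {0..L} (\<lambda>u. phi c \<kappa> u / (u + \<alpha>))"
    using assms continuous_on_phi by (intro continuous_intros) auto
  show ?thesis
  proof (cases "\<theta> = 0")
    case True
    have "u powr \<theta> * (phi c \<kappa> u / (u + \<alpha>)) = phi c \<kappa> u / (u + \<alpha>)" if "u \<in> {0..L}" for u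
      using that True by (cases "u = 0") (auto simp: phi_eq_0)
    then show ?thesis using continuous_on_cong phi_div by (metis (no_types, lifting))
  next
    case False
    then show ?thesis
      using assms by (intro continuous_on_mult continuous_on_powr_const phi_div) auto
  qed
qed

lemma exp_neg_le_powr:
  fixes x \<kappa> :: real
  assumes "0 < x" "0 < \<kappa>"
  shows "exp (- x) \<le> (\<kappa> / x) powr \<kappa>"
proof -
  have "x / \<kappa> \<le> exp (x / \<kappa>)" using exp_ge_add_one_self[of "x / \<kappa>"] by linarith
  then have "(x / \<kappa>) powr \<kappa> \<le> exp (x / \<kappa>) powr \<kappa>" using assms by (intro powr_mono2) auto
  also have "\<dots> = exp x" using assms by (simp add: exp_powr_real)
  finally have "(x / \<kappa>) powr \<kappa> \<le> exp x" .
  then show ?thesis using assms by (simp add: exp_minus powr_divide field_simps)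
qed

text \<open>With \<open>A = -ln(c \<alpha>)\<close> and \<open>B = -ln(c u)\<close> this bounds \<open>(\<alpha>/u)\<^sup>\<beta> \<phi>(u)\<close> by \<open>\<phi>(\<alpha>)\<close> for \<open>\<alpha> < u\<close>:
  either \<open>B \<ge> A/2\<close>, or the exponential factor beats every power of \<open>A\<close>.\<close>

lemma exp_gap_mult_powr_le:
  fixes A B d \<beta> \<kappa> :: real
  assumes "0 < d" "d \<le> B" "B \<le> A" "0 < \<beta>" "0 < \<kappa>"
  shows "exp (- (\<beta> * (A - B))) * B powr - \<kappa>
    \<le> (2 powr \<kappa> + (2 * \<kappa> / \<beta>) powr \<kappa> * d powr - \<kappa>) * A powr - \<kappa>"
proof (cases "A \<le> 2 * B")
  case True
  have "exp (- (\<beta> * (A - B))) \<le> 1" using assms by (simp add: zero_le_mult_iff)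
  moreover have "B powr - \<kappa> \<le> (A / 2) powr - \<kappa>"
    using assms True by (intro powr_mono2') auto
  moreover have "(A / 2) powr - \<kappa> = 2 powr \<kappa> * A powr - \<kappa>"
    using assms by (simp add: powr_divide powr_minus field_simps)
  ultimately have "exp (- (\<beta> * (A - B))) * B powr - \<kappa> \<le> 1 * (2 powr \<kappa> * A powr - \<kappa>)"
    by (intro mult_mono) auto
  also have "\<dots> \<le> (2 powr \<kappa> + (2 * \<kappa> / \<beta>) powr \<kappa> * d powr - \<kappa>) * A powr - \<kappa>"
    by (simp add: algebra_simps)
  finally show ?thesis .
next
  case False
  have "exp (- (\<beta> * (A - B))) \<le> exp (- (\<beta> * A / 2))"
    using assms False by simp
  also have "\<dots> \<le> (\<kappa> / (\<beta> * A / 2)) powr \<kappa>"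
    using assms by (intro exp_neg_le_powr) auto
  also have "\<dots> = (2 * \<kappa> / \<beta>) powr \<kappa> * A powr - \<kappa>"
    using assms by (simp add: powr_divide powr_mult powr_minus field_simps)
  finally have "exp (- (\<beta> * (A - B))) * B powr - \<kappa> \<le> ((2 * \<kappa> / \<beta>) powr \<kappa> * A powr - \<kappa>) * d powr - \<kappa>"
    using assms by (intro mult_mono powr_mono2') auto
  also have "\<dots> \<le> (2 powr \<kappa> + (2 * \<kappa> / \<beta>) powr \<kappa> * d powr - \<kappa>) * A powr - \<kappa>"
    by (simp add: algebra_simps)
  finally show ?thesis .
qed

lemma powr_ratio_mult_phi_le:
  assumes "0 < c" "0 < \<kappa>" "0 < \<beta>" "0 < \<alpha>" "\<alpha> < u" "u \<le> L" "c * L < 1"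
  shows "(\<alpha> / u) powr \<beta> * phi c \<kappa> u
    \<le> (2 powr \<kappa> + (2 * \<kappa> / \<beta>) powr \<kappa> * (- ln (c * L)) powr - \<kappa>) * phi c \<kappa> \<alpha>"
proof -
  define A B where "A = - ln (c * \<alpha>)" and "B = - ln (c * u)"
  have "c * \<alpha> \<le> c * u" "c * u \<le> c * L" using assms by simp_all
  then have "- ln (c * L) \<le> B" "B \<le> A" "0 < - ln (c * L)"
    using assms by (simp_all add: A_def B_def)
  moreover have "(\<alpha> / u) powr \<beta> = exp (- (\<beta> * (A - B)))"
    using assms by (simp add: powr_def A_def B_def ln_div ln_mult algebra_simps)
  moreover have "phi c \<kappa> u = B powr - \<kappa>" "phi c \<kappa> \<alpha> = A powr - \<kappa>"
    using assms by (simp_all add: phi_def A_def B_def)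
  ultimately show ?thesis using assms(2,3) by (simp add: exp_gap_mult_powr_le)
qed

lemma powr_mult_phi_div_le:
  assumes "0 \<le> \<theta>" "\<theta> < 1" "0 < c" "0 < \<kappa>" "c * L < 1"
  obtains C where "0 < C"
    "\<And>\<alpha> u. 0 < \<alpha> \<Longrightarrow> \<alpha> \<le> L \<Longrightarrow> 0 \<le> u \<Longrightarrow> u \<le> L \<Longrightarrow>
      u powr \<theta> * (phi c \<kappa> u / (u + \<alpha>)) \<le> C * \<alpha> powr (\<theta> - 1) * phi c \<kappa> \<alpha>"
proof
  define \<beta> where "\<beta> = 1 - \<theta>"
  define C where "C = 2 powr \<kappa> + (2 * \<kappa> / \<beta>) powr \<kappa> * (- ln (c * L)) powr - \<kappa>"
  have "0 < \<beta>" using assms by (simp add: \<beta>_def)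
  have "1 \<le> C" unfolding C_def using assms(4) by (intro add_increasing2 ge_one_powr_ge_zero) auto
  then show "0 < C" by simp
  fix \<alpha> u assume \<alpha>: "0 < \<alpha>" "\<alpha> \<le> L" and u: "0 \<le> u" "u \<le> L"
  have phi_\<alpha>: "0 \<le> \<alpha> powr (\<theta> - 1) * phi c \<kappa> \<alpha>" by (simp add: phi_nonneg)
  consider "u = 0" | "0 < u" "u \<le> \<alpha>" | "\<alpha> < u" using u by fastforce
  then show "u powr \<theta> * (phi c \<kappa> u / (u + \<alpha>)) \<le> C * \<alpha> powr (\<theta> - 1) * phi c \<kappa> \<alpha>"
  proof cases
    case 1
    then show ?thesis using \<open>0 < C\<close> phi_\<alpha> by (simp add: phi_eq_0 mult.assoc)
  next
    case 2
    have "c * \<alpha> < 1" using assms(3,5) \<alpha> by (meson le_less_trans mult_left_mono less_imp_le)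
    then have "phi c \<kappa> u \<le> phi c \<kappa> \<alpha>" using assms 2 by (intro phi_mono) auto
    moreover have "u powr \<theta> \<le> \<alpha> powr \<theta>" using 2 assms(1) by (intro powr_mono2) auto
    moreover have "1 / (u + \<alpha>) \<le> 1 / \<alpha>" using 2 \<alpha> by (simp add: frac_le)
    ultimately have "u powr \<theta> * (phi c \<kappa> u * (1 / (u + \<alpha>))) \<le> \<alpha> powr \<theta> * (phi c \<kappa> \<alpha> * (1 / \<alpha>))"
      using \<alpha> 2 by (intro mult_mono) (auto simp: phi_nonneg)
    also have "\<dots> = \<alpha> powr (\<theta> - 1) * phi c \<kappa> \<alpha>" using \<alpha> by (simp add: powr_diff)
    also have "\<dots> \<le> C * (\<alpha> powr (\<theta> - 1) * phi c \<kappa> \<alpha>)"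
      using \<open>1 \<le> C\<close> phi_\<alpha> by (simp add: mult_le_cancel_right1)
    finally show ?thesis by (simp add: mult.assoc)
  next
    case 3
    have "u powr \<theta> * (phi c \<kappa> u / (u + \<alpha>)) \<le> u powr \<theta> * (phi c \<kappa> u / u)"
      using 3 \<alpha> by (intro mult_left_mono divide_left_mono) (auto simp: phi_nonneg)
    also have "\<dots> = \<alpha> powr (\<theta> - 1) * ((\<alpha> / u) powr \<beta> * phi c \<kappa> u)"
      using 3 \<alpha> by (simp add: \<beta>_def powr_divide powr_diff field_simps)
    also have "\<dots> \<le> \<alpha> powr (\<theta> - 1) * (C * phi c \<kappa> \<alpha>)"
      unfolding C_def using assms 3 \<alpha> u \<open>0 < \<beta>\<close>
      by (intro mult_left_mono powr_ratio_mult_phi_le) auto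
    finally show ?thesis by (simp add: ac_simps)
  qed
qed

section \<open>Error of the regularized solution\<close>

context nonzero_positive_op
begin

lemma uhat_minus_eq_fcalc:
  assumes f: "continuous_on {0..onorm T} f" and source: "udag - ubar = fcalc f T w" and "0 < \<alpha>"
  shows "uhat T ubar udag \<alpha> - ubar = fcalc (\<lambda>u. u * (f u / (u + \<alpha>))) T w"
    and "uhat T ubar udag \<alpha> - udag = - \<alpha> *\<^sub>R fcalc (\<lambda>u. f u / (u + \<alpha>)) T w"
proof -
  have g: "continuous_on {0..onorm T} (\<lambda>u. f u / (u + \<alpha>))"
    using f \<open>0 < \<alpha>\<close> by (intro continuous_intros) auto
  have "(\<lambda>u. 1 / (u + \<alpha>) * f u) = (\<lambda>u. f u / (u + \<alpha>))" by auto
  then have "resolv T \<alpha> (udag - ubar) = fcalc (\<lambda>u. f u / (u + \<alpha>)) T w"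
    using fcalc_mult[of "\<lambda>u. 1 / (u + \<alpha>)" f w] f \<open>0 < \<alpha>\<close>
    by (simp add: source resolv_eq_fcalc continuous_on_divide continuous_on_add)
  then show ubar: "uhat T ubar udag \<alpha> - ubar = fcalc (\<lambda>u. u * (f u / (u + \<alpha>))) T w"
    using fcalc_mult[OF continuous_on_id g] by (simp add: uhat_def fcalc_id)
  have "uhat T ubar udag \<alpha> - udag = fcalc (\<lambda>u. u * (f u / (u + \<alpha>))) T w - fcalc f T w"
    using ubar source by (simp add: algebra_simps)
  also have "\<dots> = fcalc (\<lambda>u. u * (f u / (u + \<alpha>)) - f u) T w"
    by (rule fcalc_diff[symmetric]) (intro continuous_on_mult continuous_on_id g f)+
  also have "fcalc (\<lambda>u. u * (f u / (u + \<alpha>)) - f u) T = fcalc (\<lambda>u. - \<alpha> * (f u / (u + \<alpha>))) T"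
    using \<open>0 < \<alpha>\<close> by (intro fcalc_cong) (auto simp: field_simps)
  also have "\<dots> w = - \<alpha> *\<^sub>R fcalc (\<lambda>u. f u / (u + \<alpha>)) T w" by (rule fcalc_scaleR[OF g])
  finally show "uhat T ubar udag \<alpha> - udag = - \<alpha> *\<^sub>R fcalc (\<lambda>u. f u / (u + \<alpha>)) T w" .
qed

context
  fixes c \<kappa> :: real
  assumes c: "0 < c" and \<kappa>: "0 < \<kappa>" and c_onorm: "c * onorm T < 1"
begin

lemma continuous_on_phi_Icc_onorm: "continuous_on {0..onorm T} (phi c \<kappa>)"
  using c \<kappa> onorm_pos c_onorm by (rule continuous_on_phi)

lemma norm_fcalc_powr_mult_phi_div_le:
  assumes "0 \<le> \<theta>" "\<theta> < 1"
  obtains C where "0 < C" "\<And>\<alpha> w. 0 < \<alpha> \<Longrightarrow> \<alpha> \<le> onorm T \<Longrightarrow>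
    norm (fcalc (\<lambda>u. u powr \<theta> * (phi c \<kappa> u / (u + \<alpha>))) T w)
      \<le> C * \<alpha> powr (\<theta> - 1) * phi c \<kappa> \<alpha> * norm w"
proof -
  obtain C where "0 < C" and C: "\<And>\<alpha> u. 0 < \<alpha> \<Longrightarrow> \<alpha> \<le> onorm T \<Longrightarrow> 0 \<le> u \<Longrightarrow> u \<le> onorm T \<Longrightarrow>
      u powr \<theta> * (phi c \<kappa> u / (u + \<alpha>)) \<le> C * \<alpha> powr (\<theta> - 1) * phi c \<kappa> \<alpha>"
    using powr_mult_phi_div_le[OF assms c \<kappa> c_onorm] by blast
  have "norm (fcalc (\<lambda>u. u powr \<theta> * (phi c \<kappa> u / (u + \<alpha>))) T w)
      \<le> C * \<alpha> powr (\<theta> - 1) * phi c \<kappa> \<alpha> * norm w" if "0 < \<alpha>" "\<alpha> \<le> onorm T" for \<alpha> w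
    using that assms c \<kappa> c_onorm onorm_pos C[OF that]
    by (intro norm_fcalc_le continuous_on_powr_mult_phi_div) (auto simp: phi_nonneg)
  with \<open>0 < C\<close> that show ?thesis by blast
qed

context
  fixes udag ubar w \<rho>
  assumes source: "udag - ubar = fcalc (phi c \<kappa>) T w" and w_le: "norm w \<le> \<rho>"
begin

lemma norm_uhat_minus_udag_le:
  obtains C where "0 < C" "\<And>\<alpha>. 0 < \<alpha> \<Longrightarrow> \<alpha> \<le> onorm T \<Longrightarrow>
    norm (uhat T ubar udag \<alpha> - udag) \<le> C * \<rho> * phi c \<kappa> \<alpha>"
proof -
  obtain C where "0 < C" and C: "\<And>\<alpha> w. 0 < \<alpha> \<Longrightarrow> \<alpha> \<le> onorm T \<Longrightarrow>
      norm (fcalc (\<lambda>u. u powr 0 * (phi c \<kappa> u / (u + \<alpha>))) T w)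
        \<le> C * \<alpha> powr (0 - 1) * phi c \<kappa> \<alpha> * norm w"
    using norm_fcalc_powr_mult_phi_div_le[OF order.refl zero_less_one] by blast
  have bound: "norm (uhat T ubar udag \<alpha> - udag) \<le> C * \<rho> * phi c \<kappa> \<alpha>"
    if "0 < \<alpha>" "\<alpha> \<le> onorm T" for \<alpha>
  proof -
    have "fcalc (\<lambda>u. phi c \<kappa> u / (u + \<alpha>)) T
        = fcalc (\<lambda>u. u powr 0 * (phi c \<kappa> u / (u + \<alpha>))) T"
      by (intro fcalc_cong) (auto simp: phi_eq_0)
    then have "norm (uhat T ubar udag \<alpha> - udag)
        = \<alpha> * norm (fcalc (\<lambda>u. u powr 0 * (phi c \<kappa> u / (u + \<alpha>))) T w)"
      using uhat_minus_eq_fcalc(2)[OF continuous_on_phi_Icc_onorm source \<open>0 < \<alpha>\<close>] \<open>0 < \<alpha>\<close>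
      by simp
    also have "\<dots> \<le> \<alpha> * (C * \<alpha> powr (0 - 1) * phi c \<kappa> \<alpha> * norm w)"
      using \<open>0 < \<alpha>\<close> by (intro mult_left_mono C[OF that]) simp
    also have "\<dots> = (C * phi c \<kappa> \<alpha>) * norm w"
      using \<open>0 < \<alpha>\<close> by (simp add: powr_minus)
    also have "\<dots> \<le> (C * phi c \<kappa> \<alpha>) * \<rho>"
      using w_le \<open>0 < C\<close> by (intro mult_left_mono) (simp_all add: phi_nonneg)
    finally show ?thesis by (simp only: ac_simps)
  qed
  with \<open>0 < C\<close> show ?thesis by (rule that)
qed

lemma norm_fcalc_powr_uhat_minus_udag_le:
  assumes "0 < \<theta>" "\<theta> < 1"
  obtains C where "0 < C" "\<And>\<alpha>. 0 < \<alpha> \<Longrightarrow> \<alpha> \<le> onorm T \<Longrightarrow>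
    norm (fcalc (\<lambda>u. u powr \<theta>) T (uhat T ubar udag \<alpha> - udag)) \<le> C * \<rho> * \<alpha> powr \<theta> * phi c \<kappa> \<alpha>"
proof -
  obtain C where "0 < C" and C: "\<And>\<alpha> w. 0 < \<alpha> \<Longrightarrow> \<alpha> \<le> onorm T \<Longrightarrow>
      norm (fcalc (\<lambda>u. u powr \<theta> * (phi c \<kappa> u / (u + \<alpha>))) T w)
        \<le> C * \<alpha> powr (\<theta> - 1) * phi c \<kappa> \<alpha> * norm w"
    using norm_fcalc_powr_mult_phi_div_le[OF less_imp_le[OF assms(1)] assms(2)] by blast
  have bound: "norm (fcalc (\<lambda>u. u powr \<theta>) T (uhat T ubar udag \<alpha> - udag))
      \<le> C * \<rho> * \<alpha> powr \<theta> * phi c \<kappa> \<alpha>" if "0 < \<alpha>" "\<alpha> \<le> onorm T" for \<alpha>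
  proof -
    note powr = continuous_on_powr_const[OF \<open>0 < \<theta>\<close>]
    have phi_div: "continuous_on {0..onorm T} (\<lambda>u. phi c \<kappa> u / (u + \<alpha>))"
      using continuous_on_phi_Icc_onorm that by (intro continuous_intros) auto
    have "fcalc (\<lambda>u. u powr \<theta>) T (uhat T ubar udag \<alpha> - udag)
        = - \<alpha> *\<^sub>R fcalc (\<lambda>u. u powr \<theta>) T (fcalc (\<lambda>u. phi c \<kappa> u / (u + \<alpha>)) T w)"
      unfolding uhat_minus_eq_fcalc(2)[OF continuous_on_phi_Icc_onorm source \<open>0 < \<alpha>\<close>]
      by (rule linear_scale[OF bounded_linear.linear[OF bounded_linear_fcalc[OF powr]]])
    also have "fcalc (\<lambda>u. u powr \<theta>) T (fcalc (\<lambda>u. phi c \<kappa> u / (u + \<alpha>)) T w)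
        = fcalc (\<lambda>u. u powr \<theta> * (phi c \<kappa> u / (u + \<alpha>))) T w"
      by (rule fcalc_mult[OF powr phi_div, symmetric])
    finally have "norm (fcalc (\<lambda>u. u powr \<theta>) T (uhat T ubar udag \<alpha> - udag))
        \<le> (C * \<alpha> powr \<theta> * phi c \<kappa> \<alpha>) * norm w"
      using C[OF that] that by (simp add: powr_diff field_simps)
    also have "\<dots> \<le> (C * \<alpha> powr \<theta> * phi c \<kappa> \<alpha>) * \<rho>"
      using w_le \<open>0 < C\<close> by (intro mult_left_mono) (simp_all add: phi_nonneg)
    finally show ?thesis by (simp only: ac_simps)
  qed
  with \<open>0 < C\<close> show ?thesis by (rule that)
qed

lemma uhat_minus_ubar_eq_fcalc_powr:
  assumes "0 \<le> \<theta>" "\<theta> < 1"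
  obtains C where "0 < C" "\<And>\<alpha>. 0 < \<alpha> \<Longrightarrow> \<alpha> \<le> onorm T \<Longrightarrow>
    \<exists>y. uhat T ubar udag \<alpha> - ubar = fcalc (\<lambda>u. u powr (1 - \<theta>)) T y
      \<and> norm y \<le> C * \<rho> * \<alpha> powr (\<theta> - 1) * phi c \<kappa> \<alpha>"
proof -
  obtain C where "0 < C" and C: "\<And>\<alpha> w. 0 < \<alpha> \<Longrightarrow> \<alpha> \<le> onorm T \<Longrightarrow>
      norm (fcalc (\<lambda>u. u powr \<theta> * (phi c \<kappa> u / (u + \<alpha>))) T w)
        \<le> C * \<alpha> powr (\<theta> - 1) * phi c \<kappa> \<alpha> * norm w"
    using norm_fcalc_powr_mult_phi_div_le[OF assms] by blast
  have eq: "uhat T ubar udag \<alpha> - ubar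
      = fcalc (\<lambda>u. u powr (1 - \<theta>)) T (fcalc (\<lambda>u. u powr \<theta> * (phi c \<kappa> u / (u + \<alpha>))) T w)"
    if "0 < \<alpha>" "\<alpha> \<le> onorm T" for \<alpha>
  proof -
    have "fcalc (\<lambda>u. u powr (1 - \<theta>)) T (fcalc (\<lambda>u. u powr \<theta> * (phi c \<kappa> u / (u + \<alpha>))) T w)
        = fcalc (\<lambda>u. u powr (1 - \<theta>) * (u powr \<theta> * (phi c \<kappa> u / (u + \<alpha>)))) T w"
      using assms that c \<kappa> c_onorm onorm_pos
      by (intro fcalc_mult[symmetric] continuous_on_powr_const continuous_on_powr_mult_phi_div) auto
    also have "fcalc (\<lambda>u. u powr (1 - \<theta>) * (u powr \<theta> * (phi c \<kappa> u / (u + \<alpha>)))) T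
        = fcalc (\<lambda>u. u * (phi c \<kappa> u / (u + \<alpha>))) T"
      by (intro fcalc_cong) (auto simp: powr_add[symmetric])
    finally show ?thesis
      using uhat_minus_eq_fcalc(1)[OF continuous_on_phi_Icc_onorm source \<open>0 < \<alpha>\<close>] by simp
  qed
  have "C * \<alpha> powr (\<theta> - 1) * phi c \<kappa> \<alpha> * norm w \<le> C * \<rho> * \<alpha> powr (\<theta> - 1) * phi c \<kappa> \<alpha>" for \<alpha>
    using mult_left_mono[OF w_le, of "C * \<alpha> powr (\<theta> - 1) * phi c \<kappa> \<alpha>"] \<open>0 < C\<close>
    by (simp add: phi_nonneg ac_simps)
  with eq C have "\<exists>y. uhat T ubar udag \<alpha> - ubar = fcalc (\<lambda>u. u powr (1 - \<theta>)) T y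
      \<and> norm y \<le> C * \<rho> * \<alpha> powr (\<theta> - 1) * phi c \<kappa> \<alpha>" if "0 < \<alpha>" "\<alpha> \<le> onorm T" for \<alpha>
    using that by (blast intro: order_trans)
  with \<open>0 < C\<close> show ?thesis by (rule that)
qed

end

end

lemma regularization_error_estimates:
  assumes "1 < s" "0 < b" "b < s" "0 < c" "0 < \<kappa>" "c * onorm (fcalc (\<lambda>t. t powr s) T) < 1"
    and "udag - ubar = fcalc (phi c \<kappa>) (fcalc (\<lambda>t. t powr s) T) w" and "norm w \<le> \<rho>"
  obtains C1 C2 C3 where "0 < C1" "0 < C2" "0 < C3"
    "\<forall>\<alpha>\<in>{0<..onorm (fcalc (\<lambda>t. t powr s) T)}.
      norm (uhat (fcalc (\<lambda>t. t powr s) T) ubar udag \<alpha> - udag) \<le> C1 * \<rho> * phi c \<kappa> \<alpha>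
    \<and> norm (fcalc (\<lambda>t. t powr b) T (uhat (fcalc (\<lambda>t. t powr s) T) ubar udag \<alpha> - udag))
        \<le> C2 * \<rho> * \<alpha> powr (b / s) * phi c \<kappa> \<alpha>
    \<and> (\<exists>y. uhat (fcalc (\<lambda>t. t powr s) T) ubar udag \<alpha> - ubar = T y
        \<and> norm y \<le> C3 * \<rho> * \<alpha> powr - (1 / s) * phi c \<kappa> \<alpha>)"
proof -
  let ?G = "fcalc (\<lambda>t. t powr s) T"
  interpret G: nonzero_positive_op ?G using assms(1) by (intro nonzero_positive_op_fcalc_powr) simp
  note source = assms(4-8)
  have \<theta>: "0 < b / s" "b / s < 1" "0 \<le> 1 - 1 / s" "1 - 1 / s < 1" "1 - (1 - 1 / s) = 1 / s"
    "1 - 1 / s - 1 = - (1 / s)"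
    using assms(1-3) by simp_all
  have powers: "fcalc (\<lambda>t. t powr b) T = fcalc (\<lambda>u. u powr (b / s)) ?G"
    "T = fcalc (\<lambda>u. u powr (1 / s)) ?G"
    using fcalc_powr_powr[of s "b / s"] fcalc_powr_powr[of s "1 / s"] fcalc_powr_1 assms(1,2)
    by simp_all
  obtain C1 where "0 < C1" "\<And>\<alpha>. 0 < \<alpha> \<Longrightarrow> \<alpha> \<le> onorm ?G \<Longrightarrow>
      norm (uhat ?G ubar udag \<alpha> - udag) \<le> C1 * \<rho> * phi c \<kappa> \<alpha>"
    using G.norm_uhat_minus_udag_le[OF source] by blast
  moreover obtain C2 where "0 < C2" "\<And>\<alpha>. 0 < \<alpha> \<Longrightarrow> \<alpha> \<le> onorm ?G \<Longrightarrow>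
      norm (fcalc (\<lambda>t. t powr b) T (uhat ?G ubar udag \<alpha> - udag))
        \<le> C2 * \<rho> * \<alpha> powr (b / s) * phi c \<kappa> \<alpha>"
    using G.norm_fcalc_powr_uhat_minus_udag_le[OF source \<theta>(1,2)] unfolding powers(1) by blast
  moreover obtain C3 where "0 < C3" "\<And>\<alpha>. 0 < \<alpha> \<Longrightarrow> \<alpha> \<le> onorm ?G \<Longrightarrow> \<exists>y.
      uhat ?G ubar udag \<alpha> - ubar = T y \<and> norm y \<le> C3 * \<rho> * \<alpha> powr - (1 / s) * phi c \<kappa> \<alpha>"
    using G.uhat_minus_ubar_eq_fcalc_powr[OF source \<theta>(3,4)] unfolding \<theta>(5,6) powers(2)[symmetric]
    by blast
  ultimately show ?thesis using that by simp
qed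

end

lemma nonzero_positive_op_inverse:
  assumes B_sa: "selfadjoint_unbounded D B" and B_pos: "\<forall>u\<in>D. 0 \<le> inner (B u) u"
    and "bounded_linear Binv" and Binv_right: "\<forall>x. Binv x \<in> D \<and> B (Binv x) = x"
  shows "nonzero_positive_op Binv"
proof
  have sa: "inner (B u) v = inner u (B v)" if "u \<in> D" "v \<in> D" for u v
    using B_sa that by (simp add: selfadjoint_unbounded_def)
  show "positive_op Binv"
    unfolding positive_op_def
  proof (intro conjI allI \<open>bounded_linear Binv\<close>)
    show "inner (Binv x) y = inner x (Binv y)" for x y
      using sa[of "Binv x" "Binv y"] Binv_right by (simp add: inner_commute)
    show "0 \<le> inner (Binv x) x" for x
      using B_pos Binv_right by (metis inner_commute)
  qed
  show "0 < onorm Binv"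
  proof (subst onorm_pos_lt[OF \<open>bounded_linear Binv\<close>], rule notI)
    assume "\<forall>x. Binv x = 0"
    then have zero: "x = 0" for x :: 'a using Binv_right by metis
    have "\<exists>K. \<forall>u\<in>D. norm (B u) \<le> K * norm u" by (rule exI[of _ 0]) (simp add: zero[of "B _"])
    then show False using B_sa by (simp add: selfadjoint_unbounded_def)
  qed
qed

theorem lemma3p3:
  fixes B Binv :: "'a::{real_inner,complete_space} \<Rightarrow> 'a" and D :: "'a set"
    and m a \<kappa> c \<rho> :: real and ubar udag w :: 'a
  assumes B_sa: "selfadjoint_unbounded D B"
    and B_pos: "\<forall>u\<in>D. inner (B u) u \<ge> 0"
    and m_pos: "m > 0" and B_coercive: "\<forall>u\<in>D. norm (B u) \<ge> m * norm u"
    and Binv_bl: "bounded_linear Binv"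
    and Binv_right: "\<forall>x. Binv x \<in> D \<and> B (Binv x) = x"
    and Binv_left: "\<forall>u\<in>D. Binv (B u) = u"
    and a_pos: "a > 0" and \<kappa>_pos: "\<kappa> > 0"
    and c_pos: "c > 0" and c_lt: "c < 1 / onorm (neg_pow Binv (2*a+2))"
    and source: "udag - ubar = fcalc (phi c \<kappa>) (neg_pow Binv (2*a+2)) w"
    and w_le: "norm w \<le> \<rho>" and \<rho>_pos: "\<rho> > 0"
  shows "\<exists>C1 C2 C3 \<alpha>0. C1 > 0 \<and> C2 > 0 \<and> C3 > 0 \<and> 0 < \<alpha>0 \<and> \<alpha>0 \<le> onorm (neg_pow Binv (2*a+2)) \<and>
    (\<forall>\<alpha>\<in>{0<..\<alpha>0}.
       norm (uhat (neg_pow Binv (2*a+2)) ubar udag \<alpha> - udag) \<le> C1 * phi c \<kappa> \<alpha>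
     \<and> norm (neg_pow Binv a (uhat (neg_pow Binv (2*a+2)) ubar udag \<alpha> - udag))
         \<le> C2 * \<alpha> powr (1 / ((2*a+2)/a)) * phi c \<kappa> \<alpha>
     \<and> uhat (neg_pow Binv (2*a+2)) ubar udag \<alpha> - ubar \<in> D
     \<and> norm (B (uhat (neg_pow Binv (2*a+2)) ubar udag \<alpha> - ubar))
         \<le> C3 * \<alpha> powr (- (1 / (((2*a+2)/a) * a))) * phi c \<kappa> \<alpha>)"
proof -
  define s where "s = 2 * a + 2"
  have s: "1 < s" "a < s" "1 / ((2 * a + 2) / a) = a / s" "1 / ((2 * a + 2) / a * a) = 1 / s"
    using a_pos by (simp_all add: s_def)
  interpret Binv: nonzero_positive_op Binv
    by (rule nonzero_positive_op_inverse[OF B_sa B_pos Binv_bl Binv_right])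
  let ?G = "fcalc (\<lambda>t. t powr s) Binv"
  have G: "neg_pow Binv (2 * a + 2) = ?G" by (simp add: neg_pow_def s_def)
  have "0 < onorm ?G" using s Binv.onorm_pos by (simp add: Binv.onorm_fcalc_powr)
  then have "c * onorm ?G < 1" using c_lt G by (simp add: less_divide_eq)
  then obtain C1 C2 C3 where "0 < C1" "0 < C2" "0 < C3" and bounds: "\<forall>\<alpha>\<in>{0<..onorm ?G}.
      norm (uhat ?G ubar udag \<alpha> - udag) \<le> C1 * \<rho> * phi c \<kappa> \<alpha>
    \<and> norm (fcalc (\<lambda>t. t powr a) Binv (uhat ?G ubar udag \<alpha> - udag))
        \<le> C2 * \<rho> * \<alpha> powr (a / s) * phi c \<kappa> \<alpha>
    \<and> (\<exists>y. uhat ?G ubar udag \<alpha> - ubar = Binv y \<and> norm y \<le> C3 * \<rho> * \<alpha> powr - (1 / s) * phi c \<kappa> \<alpha>)"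
    using Binv.regularization_error_estimates[OF s(1) a_pos s(2) c_pos \<kappa>_pos _ source[unfolded G]]
      w_le
    by blast
  have "\<forall>\<alpha>\<in>{0<..onorm ?G}. norm (uhat ?G ubar udag \<alpha> - udag) \<le> C1 * \<rho> * phi c \<kappa> \<alpha>
    \<and> norm (fcalc (\<lambda>t. t powr a) Binv (uhat ?G ubar udag \<alpha> - udag))
        \<le> C2 * \<rho> * \<alpha> powr (a / s) * phi c \<kappa> \<alpha>
    \<and> uhat ?G ubar udag \<alpha> - ubar \<in> D
    \<and> norm (B (uhat ?G ubar udag \<alpha> - ubar)) \<le> C3 * \<rho> * \<alpha> powr - (1 / s) * phi c \<kappa> \<alpha>"
    using bounds Binv_right by (metis (no_types, lifting))
  moreover have "0 < C1 * \<rho>" "0 < C2 * \<rho>" "0 < C3 * \<rho>"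
    using \<open>0 < C1\<close> \<open>0 < C2\<close> \<open>0 < C3\<close> \<rho>_pos by simp_all
  ultimately show ?thesis
    unfolding G neg_pow_def[of Binv a] s(3,4)
    by (intro exI[of _ "C1 * \<rho>"] exI[of _ "C2 * \<rho>"] exI[of _ "C3 * \<rho>"] exI[of _ "onorm ?G"]
        conjI order.refl \<open>0 < onorm ?G\<close>)
qed

end
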